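(* Let $\varphi:\mathbb{R}^n\to\mathbb{R}$ be of class $\mathcal{C}^{1,1}$ and let $x^0\in\mathbb{R}^n$ be such that, with $\Omega:=\{x\in\mathbb{R}^n\mid \varphi(x)\le\varphi(x^0)\}$: (1) for every $x\in\Omega$ the mapping $\partial^2\varphi(x)$ is positive-definite, i.e. $\langle z,u\rangle>0$ for all $u\neq 0$ and all $z\in\partial^2\varphi(x)(u)$; (2) $\Omega$ is bounded. Then every sequence $\{x^k\}$ generated by the Generalized Damped Newton Algorithm (with parameters $\sigma\in(0,\tfrac12)$, $\beta\in(0,1)$) from the starting point $x^0$ is convergent, and its limit is a tilt-stable local minimizer of $\varphi$.
   Context: A function $\varphi:\mathbb{R}^n\to\mathbb{R}$ is of class $\mathcal{C}^{1,1}$ if it is continuously differentiable and $\nabla\varphi$ is Lipschitz continuous around every point. For $\Omega\subset\mathbb{R}^s$ and $\bar z\in\Omega$, the regular normal cone is $\widehat N_\Omega(\bar z):=\{v\mid \limsup_{z\to\bar z,\,z\in\Omega}\langle v,z-\bar z\rangle/\|z-\bar z\|\le 0\}$ and the limiting normal cone $N_\Omega(\bar z)$ is the set of all $v$ for which there exist $z_k\to\bar z$ with $z_k\in\Omega$ and $v_k\to v$ with $v_k\in\widehat N_\Omega(z_k)$. For a set-valued map $F:\mathbb{R}^n\rightrightarrows\mathbb{R}^m$ and $(\bar x,\bar y)\in\operatorname{gph}F$, the coderivative is $D^*F(\bar x,\bar y)(v):=\{u\mid (u,-v)\in N_{\operatorname{gph}F}(\bar x,\bar y)\}$. For $\varphi$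 of class $\mathcal{C}^{1,1}$, the second-order subdifferential (generalized Hessian) is $\partial^2\varphi(x)(u):=D^*(\nabla\varphi)(x,\nabla\varphi(x))(u)$, $u\in\mathbb{R}^n$. A point $\bar x$ is a tilt-stable local minimizer of $\varphi$ if there is $\gamma>0$ such that the map $M_\gamma(v):=\operatorname{argmin}\{\varphi(x)-\langle v,x\rangle\mid x\in\mathbb{B}_\gamma(\bar x)\}$ is single-valued and Lipschitz continuous on a neighborhood of $0$ with $M_\gamma(0)=\{\bar x\}$. Generalized Damped Newton Algorithm: given $\sigma\in(0,\tfrac12)$, $\beta\in(0,1)$ and $x^0$, set $k=0$. If $\nabla\varphi(x^k)=0$ stop. Otherwise choose $d^k$ with $-\nabla\varphi(x^k)\in\partial^2\varphi(x^k)(d^k)$; set $\tau_k=1$ and, while $\varphi(x^k+\tau_kd^k)>\varphi(x^k)+\sigma\tau_k\langle\nabla\varphi(x^k),d^k\rangle$, replace $\tau_k$ by $\beta\tau_k$; set $x^{k+1}:=x^k+\tau_kd^k$, increase $k$ by 1 and repeat. *)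

theory Defs
  imports "HOL-Analysis.Analysis"
begin

definition grad :: "('a::euclidean_space \<Rightarrow> real) \<Rightarrow> 'a \<Rightarrow> 'a" where
  "grad \<phi> x = (THE D. GDERIV \<phi> x :> D)"

definition C11 :: "('a::euclidean_space \<Rightarrow> real) \<Rightarrow> bool" where
  "C11 \<phi> \<longleftrightarrow> (\<forall>x. \<phi> differentiable (at x)) \<and> continuous_on UNIV (grad \<phi>) \<and>
     (\<forall>x. \<exists>U L. open U \<and> x \<in> U \<and> L-lipschitz_on U (grad \<phi>))"

text \<open>Regular (Frechet) normal cone: limsup_{z -> zb, z in Omega} <v, z - zb>/|z - zb| <= 0,
  written out.\<close>
definition regular_normal_cone :: "'a::euclidean_space set \<Rightarrow> 'a \<Rightarrow> 'a set" where
  "regular_normal_cone \<Omega> zb = {v. \<forall>\<epsilon>>0. \<exists>\<delta>>0. \<forall>z\<in>\<Omega>. 0 < dist z zb \<and> dist z zb < \<delta> \<longrightarrow>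
      inner v (z - zb) \<le> \<epsilon> * norm (z - zb)}"

definition limiting_normal_cone :: "'a::euclidean_space set \<Rightarrow> 'a \<Rightarrow> 'a set" where
  "limiting_normal_cone \<Omega> zb = {v. \<exists>z w. (\<forall>k. z k \<in> \<Omega>) \<and> z \<longlonglongrightarrow> zb \<and>
      w \<longlonglongrightarrow> v \<and> (\<forall>k. w k \<in> regular_normal_cone \<Omega> (z k))}"

definition graph :: "('a \<Rightarrow> 'b set) \<Rightarrow> ('a \<times> 'b) set" where
  "graph F = {(x, y). y \<in> F x}"

definition coderivative ::
  "('a::euclidean_space \<Rightarrow> 'b::euclidean_space set) \<Rightarrow> 'a \<Rightarrow> 'b \<Rightarrow> 'b \<Rightarrow> 'a set" where
  "coderivative F x y v = {u. (u, - v) \<in> limiting_normal_cone (graph F) (x, y)}"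

definition second_subdiff :: "('a::euclidean_space \<Rightarrow> real) \<Rightarrow> 'a \<Rightarrow> 'a \<Rightarrow> 'a set" where
  "second_subdiff \<phi> x u = coderivative (\<lambda>y. {grad \<phi> y}) x (grad \<phi> x) u"

definition tilt_argmin :: "('a::euclidean_space \<Rightarrow> real) \<Rightarrow> 'a \<Rightarrow> real \<Rightarrow> 'a \<Rightarrow> 'a set" where
  "tilt_argmin \<phi> xb \<gamma> v = {x \<in> cball xb \<gamma>. \<forall>y\<in>cball xb \<gamma>. \<phi> x - inner v x \<le> \<phi> y - inner v y}"

definition tilt_stable_local_min :: "('a::euclidean_space \<Rightarrow> real) \<Rightarrow> 'a \<Rightarrow> bool" where
  "tilt_stable_local_min \<phi> xb \<longleftrightarrow> (\<exists>\<gamma>>0. \<exists>U m L. open U \<and> 0 \<in> U \<and>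
      (\<forall>v\<in>U. tilt_argmin \<phi> xb \<gamma> v = {m v}) \<and> L-lipschitz_on U m \<and>
      tilt_argmin \<phi> xb \<gamma> 0 = {xb})"

definition armijo :: "('a::euclidean_space \<Rightarrow> real) \<Rightarrow> real \<Rightarrow> real \<Rightarrow> 'a \<Rightarrow> 'a \<Rightarrow> nat \<Rightarrow> bool" where
  "armijo \<phi> \<sigma> \<beta> x d j \<longleftrightarrow>
     \<phi> (x + (\<beta> ^ j) *\<^sub>R d) \<le> \<phi> x + \<sigma> * (\<beta> ^ j) * inner (grad \<phi> x) d"

text \<open>If the algorithm stops at iteration k (grad = 0), the sequence is continued
  constantly; backtracking yields tau_k = beta^j with j the first index
  satisfying the Armijo condition.\<close>
definition gdna_sequence ::
  "('a::euclidean_space \<Rightarrow> real) \<Rightarrow> real \<Rightarrow> real \<Rightarrow> 'a \<Rightarrow> (nat \<Rightarrow> 'a) \<Rightarrow> bool" where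
  "gdna_sequence \<phi> \<sigma> \<beta> x0 x \<longleftrightarrow> x 0 = x0 \<and>
     (\<forall>k. if grad \<phi> (x k) = 0 then x (Suc k) = x k
          else (\<exists>d j. - grad \<phi> (x k) \<in> second_subdiff \<phi> (x k) d \<and>
                  armijo \<phi> \<sigma> \<beta> (x k) d j \<and> (\<forall>i<j. \<not> armijo \<phi> \<sigma> \<beta> (x k) d i) \<and>
                  x (Suc k) = x k + (\<beta> ^ j) *\<^sub>R d))"

end

(* Along the iterates, which stay in the compact level set, compactness and the closedness
   of limiting coderivatives upgrade the pointwise positive-definiteness of the generalized
   Hessian to a uniform modulus kappa, valid also for regular coderivatives of grad phi at
   nearby points.  A Newton direction d then satisfies kappa ||d||^2 <= -<grad phi, d> and
   ||grad phi|| <= L ||d||, backtracking stops at a step bounded away from 0, and one gets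
   the sufficient decrease  phi(x') <= phi(x) - sigma kappa ||x' - x||^2  and
   ||grad phi(x)||^2 <= C (phi(x) - phi(x')).  Hence grad phi(x^k) -> 0, x^(k+1) - x^k -> 0,
   and every cluster point xb is stationary.
   Near xb the uniform bound on regular coderivatives makes grad phi strongly monotone, by an
   approximate mean-value inequality for the Lipschitz function <u, grad phi(.)>.  Strong
   monotonicity yields the error bound kappa ||x - xb|| <= ||grad phi(x)||, which together
   with the vanishing steps traps the whole sequence near xb, and it makes the tilted argmin
   map single-valued and (1/kappa)-Lipschitz, i.e. xb is a tilt-stable minimizer. *)

theory Submission
  imports Defs
begin

lemma has_derivative_grad:
  fixes \<phi> :: "'a::euclidean_space \<Rightarrow> real"
  assumes "\<phi> differentiable (at x)"
  shows "(\<phi> has_derivative (\<lambda>h. inner h (grad \<phi> x))) (at x)"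
proof -
  obtain D where D: "(\<phi> has_derivative D) (at x)"
    using assms by (auto simp: differentiable_def)
  have "D = (\<lambda>h. inner h (adjoint D 1))"
    using has_derivative_linear[OF D] by (simp add: adjoint_works)
  then have ex: "GDERIV \<phi> x :> adjoint D 1"
    using D by (simp add: gderiv_def)
  have "d = adjoint D 1" if "GDERIV \<phi> x :> d" for d
  proof -
    have "(\<lambda>h. inner h d) = (\<lambda>h. inner h (adjoint D 1))"
      using has_derivative_unique that ex by (auto simp: gderiv_def)
    then show ?thesis by (simp add: fun_eq_iff vector_eq_ldot)
  qed
  with ex have "grad \<phi> x = adjoint D 1"
    unfolding grad_def by (rule the_equality)
  with ex show ?thesis by (simp add: gderiv_def)
qed

lemma has_real_derivative_grad_along_line:
  fixes \<phi> :: "'a::euclidean_space \<Rightarrow> real"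
  assumes "\<phi> differentiable (at (x + t *\<^sub>R d))"
  shows "((\<lambda>t. \<phi> (x + t *\<^sub>R d)) has_real_derivative inner (grad \<phi> (x + t *\<^sub>R d)) d) (at t)"
proof -
  have "((\<lambda>t. x + t *\<^sub>R d) has_derivative (\<lambda>s. s *\<^sub>R d)) (at t)"
    by (auto intro!: derivative_eq_intros)
  from has_derivative_compose[OF this has_derivative_grad[OF assms]]
  have "((\<lambda>t. \<phi> (x + t *\<^sub>R d)) has_derivative (\<lambda>s. inner (s *\<^sub>R d) (grad \<phi> (x + t *\<^sub>R d)))) (at t)" .
  then show ?thesis
    unfolding has_field_derivative_def
    by (rule has_derivative_eq_rhs) (simp add: fun_eq_iff inner_commute)
qed

lemma grad_mean_value:
  fixes \<phi> :: "'a::euclidean_space \<Rightarrow> real"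
  assumes "\<forall>x. \<phi> differentiable (at x)"
  obtains s where "0 \<le> s" "s \<le> 1" "\<phi> (x + d) - \<phi> x = inner (grad \<phi> (x + s *\<^sub>R d)) d"
proof -
  let ?g = "\<lambda>t. \<phi> (x + t *\<^sub>R d)"
  have D: "(?g has_real_derivative inner (grad \<phi> (x + t *\<^sub>R d)) d) (at t)" for t
    using assms by (intro has_real_derivative_grad_along_line) blast
  then have "continuous_on {0..1} ?g"
    by (meson DERIV_isCont continuous_at_imp_continuous_on)
  then obtain l s where "0 < s" "s < 1" "DERIV ?g s :> l" "?g 1 - ?g 0 = l"
    using MVT[of 0 1 ?g] D real_differentiable_def by force
  then show ?thesis
    using that[of s] DERIV_unique[OF _ D] by fastforce
qed

section \<open>Regular and limiting coderivatives of single-valued maps\<close>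

definition regular_coderivative ::
  "('a::euclidean_space \<Rightarrow> 'b::euclidean_space) \<Rightarrow> 'a \<Rightarrow> 'b \<Rightarrow> 'a set" where
  "regular_coderivative f x v = {w. (w, - v) \<in> regular_normal_cone (graph (\<lambda>y. {f y})) (x, f x)}"

lemma regular_coderivative_iff:
  "w \<in> regular_coderivative f x v \<longleftrightarrow>
    (\<forall>e>0. \<exists>\<delta>>0. \<forall>y. 0 < dist (y, f y) (x, f x) \<and> dist (y, f y) (x, f x) < \<delta> \<longrightarrow>
       inner w (y - x) - inner v (f y - f x) \<le> e * norm (y - x, f y - f x))"
proof -
  have "graph (\<lambda>y. {f y}) = range (\<lambda>y. (y, f y))"
    by (auto simp: graph_def)
  then show ?thesis
    by (simp add: regular_coderivative_def regular_normal_cone_def)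
qed

lemma regular_coderivativeD:
  assumes "w \<in> regular_coderivative f x v" "0 < e"
  obtains \<delta> where "\<delta> > 0" "\<And>y. 0 < dist (y, f y) (x, f x) \<Longrightarrow> dist (y, f y) (x, f x) < \<delta> \<Longrightarrow>
    inner w (y - x) - inner v (f y - f x) \<le> e * norm (y - x, f y - f x)"
  using assms unfolding regular_coderivative_iff by metis

lemma regular_coderivativeI:
  assumes "\<And>e. 0 < e \<Longrightarrow> \<exists>\<delta>>0. \<forall>y. 0 < dist (y, f y) (x, f x) \<and> dist (y, f y) (x, f x) < \<delta> \<longrightarrow>
    inner w (y - x) - inner v (f y - f x) \<le> e * norm (y - x, f y - f x)"
  shows "w \<in> regular_coderivative f x v"
  using assms unfolding regular_coderivative_iff by blast

lemma regular_coderivative_scaleR: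
  assumes w: "w \<in> regular_coderivative f x v" and "0 < c"
  shows "c *\<^sub>R w \<in> regular_coderivative f x (c *\<^sub>R v)"
proof (rule regular_coderivativeI)
  fix e :: real assume "0 < e"
  then obtain \<delta> where "\<delta> > 0" and \<delta>: "\<And>y. 0 < dist (y, f y) (x, f x) \<Longrightarrow> dist (y, f y) (x, f x) < \<delta> \<Longrightarrow>
      inner w (y - x) - inner v (f y - f x) \<le> e / c * norm (y - x, f y - f x)"
    using regular_coderivativeD[OF w, of "e / c"] \<open>0 < c\<close> by auto
  show "\<exists>\<delta>>0. \<forall>y. 0 < dist (y, f y) (x, f x) \<and> dist (y, f y) (x, f x) < \<delta> \<longrightarrow>
      inner (c *\<^sub>R w) (y - x) - inner (c *\<^sub>R v) (f y - f x) \<le> e * norm (y - x, f y - f x)"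
  proof (intro exI[of _ \<delta>] conjI allI impI)
    fix y assume "0 < dist (y, f y) (x, f x) \<and> dist (y, f y) (x, f x) < \<delta>"
    then have "c * (inner w (y - x) - inner v (f y - f x)) \<le> c * (e / c * norm (y - x, f y - f x))"
      using \<delta> \<open>0 < c\<close> by (intro mult_left_mono) auto
    then show "inner (c *\<^sub>R w) (y - x) - inner (c *\<^sub>R v) (f y - f x) \<le> e * norm (y - x, f y - f x)"
      using \<open>0 < c\<close> by (simp add: algebra_simps)
  qed (fact \<open>\<delta> > 0\<close>)
qed

lemma regular_coderivative_norm_le:
  assumes "open V" "x \<in> V" and lip: "L-lipschitz_on V f"
    and w: "w \<in> regular_coderivative f x v"
  shows "norm w \<le> L * norm v"
proof (cases "w = 0")
  case True
  then show ?thesis using lipschitz_on_nonneg[OF lip] by simp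
next
  case False
  have L: "0 \<le> L" using lipschitz_on_nonneg[OF lip] .
  obtain r where "r > 0" "ball x r \<subseteq> V" using assms open_contains_ball by blast
  show ?thesis
  proof (rule field_le_epsilon)
    fix e :: real assume "0 < e"
    then have "e / (1 + L) > 0" using L by simp
    then obtain \<delta> where "\<delta> > 0" and \<delta>: "\<And>y. 0 < dist (y, f y) (x, f x) \<Longrightarrow> dist (y, f y) (x, f x) < \<delta> \<Longrightarrow>
        inner w (y - x) - inner v (f y - f x) \<le> e / (1 + L) * norm (y - x, f y - f x)"
      using regular_coderivativeD[OF w] by blast
    define t where "t = min (\<delta> / (2 * (1 + L))) (r / 2)"
    have "t * (1 + L) \<le> \<delta> / (2 * (1 + L)) * (1 + L)"
      using L by (intro mult_right_mono) (auto simp: t_def)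
    also have "\<dots> = \<delta> / 2" using L by (simp add: field_simps)
    also have "\<dots> < \<delta>" using \<open>\<delta> > 0\<close> by simp
    finally have t: "t > 0" "t * (1 + L) < \<delta>" "t < r"
      using \<open>\<delta> > 0\<close> \<open>r > 0\<close> L by (auto simp: t_def)
    define y where "y = x + (t / norm w) *\<^sub>R w"
    have yx: "norm (y - x) = t" "inner w (y - x) = t * norm w"
      using False t by (simp_all add: y_def power2_norm_eq_inner[symmetric] power2_eq_square)
    have "y \<in> V" using yx t \<open>ball x r \<subseteq> V\<close> by (auto simp: dist_norm norm_minus_commute)
    then have fy: "norm (f y - f x) \<le> L * t"
      using lipschitz_on_normD[OF lip _ \<open>x \<in> V\<close>] yx by metis
    have pair: "t \<le> norm (y - x, f y - f x)" "norm (y - x, f y - f x) \<le> t * (1 + L)"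
      using norm_Pair_le[of "y - x" "f y - f x"] fy yx by (auto simp: norm_Pair algebra_simps)
    have "t * norm w - norm v * (L * t) \<le> inner w (y - x) - inner v (f y - f x)"
      using yx Cauchy_Schwarz_ineq2[of v "f y - f x"] mult_left_mono[OF fy norm_ge_zero[of v]] by linarith
    also have "\<dots> \<le> e / (1 + L) * norm (y - x, f y - f x)"
      using pair t by (intro \<delta>) (auto simp: dist_norm)
    also have "\<dots> \<le> e / (1 + L) * (t * (1 + L))"
      using pair \<open>0 < e\<close> L by (intro mult_left_mono) auto
    also have "\<dots> = t * e" using L by simp
    finally have "t * norm w \<le> t * (L * norm v + e)" by (simp add: algebra_simps)
    then show "norm w \<le> L * norm v + e" using t by simp
  qed
qed

lemma proximal_subgradient_in_regular_coderivative:
  assumes "\<delta> > 0"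
    and prox: "\<And>y. dist y x < \<delta> \<Longrightarrow> inner w (y - x) - C * (norm (y - x))\<^sup>2 \<le> inner v (f y) - inner v (f x)"
  shows "w \<in> regular_coderivative f x v"
proof (rule regular_coderivativeI)
  fix e :: real assume "0 < e"
  define C' where "C' = \<bar>C\<bar> + 1"
  have C': "C' > 0" "C \<le> C'" by (auto simp: C'_def)
  define \<delta>' where "\<delta>' = min \<delta> (e / C')"
  show "\<exists>\<delta>>0. \<forall>y. 0 < dist (y, f y) (x, f x) \<and> dist (y, f y) (x, f x) < \<delta> \<longrightarrow>
      inner w (y - x) - inner v (f y - f x) \<le> e * norm (y - x, f y - f x)"
  proof (intro exI[of _ \<delta>'] conjI allI impI)
    show "\<delta>' > 0" using \<open>\<delta> > 0\<close> \<open>0 < e\<close> C' by (simp add: \<delta>'_def)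
    fix y assume "0 < dist (y, f y) (x, f x) \<and> dist (y, f y) (x, f x) < \<delta>'"
    moreover have n1: "norm (y - x) \<le> norm (y - x, f y - f x)" by (simp add: norm_Pair)
    ultimately have ny: "norm (y - x) < \<delta>'" by (simp add: dist_norm)
    have "inner w (y - x) - inner v (f y - f x) \<le> C * (norm (y - x))\<^sup>2"
      using prox[of y] ny by (simp add: \<delta>'_def dist_norm inner_diff_right)
    also have "\<dots> \<le> C' * (norm (y - x) * norm (y - x))"
      using C' by (simp add: power2_eq_square mult_right_mono)
    also have "\<dots> \<le> C' * ((e / C') * norm (y - x))"
      using ny C' by (intro mult_left_mono mult_right_mono) (auto simp: \<delta>'_def)
    also have "\<dots> \<le> e * norm (y - x, f y - f x)" using n1 \<open>0 < e\<close> C' by simp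
    finally show "inner w (y - x) - inner v (f y - f x) \<le> e * norm (y - x, f y - f x)" .
  qed
qed

lemma coderivative_graph_iff:
  "w \<in> coderivative (\<lambda>y. {f y}) x (f x) v \<longleftrightarrow> (\<exists>X W V. X \<longlonglongrightarrow> x \<and> (\<lambda>k. f (X k)) \<longlonglongrightarrow> f x \<and>
     W \<longlonglongrightarrow> w \<and> V \<longlonglongrightarrow> v \<and> (\<forall>k. W k \<in> regular_coderivative f (X k) (V k)))"
proof
  assume "w \<in> coderivative (\<lambda>y. {f y}) x (f x) v"
  then obtain z p where z: "\<And>k. z k \<in> graph (\<lambda>y. {f y})" "z \<longlonglongrightarrow> (x, f x)" and p: "p \<longlonglongrightarrow> (w, - v)"
    and rn: "\<And>k. p k \<in> regular_normal_cone (graph (\<lambda>y. {f y})) (z k)"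
    unfolding coderivative_def limiting_normal_cone_def by blast
  define X where "X k = fst (z k)" for k
  have "snd (z k) = f (X k)" for k
    using z(1)[of k] by (cases "z k") (simp add: graph_def X_def)
  then have zX: "z = (\<lambda>k. (X k, f (X k)))"
    by (simp add: fun_eq_iff prod_eq_iff X_def)
  have "X \<longlonglongrightarrow> x" "(\<lambda>k. f (X k)) \<longlonglongrightarrow> f x"
    using tendsto_fst[OF z(2)] tendsto_snd[OF z(2)] by (simp_all add: zX)
  moreover have "(\<lambda>k. fst (p k)) \<longlonglongrightarrow> w" "(\<lambda>k. - snd (p k)) \<longlonglongrightarrow> v"
    using tendsto_fst[OF p] tendsto_minus[OF tendsto_snd[OF p]] by simp_all
  moreover have "fst (p k) \<in> regular_coderivative f (X k) (- snd (p k))" for k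
    using rn[of k] by (simp add: regular_coderivative_def zX)
  ultimately show "\<exists>X W V. X \<longlonglongrightarrow> x \<and> (\<lambda>k. f (X k)) \<longlonglongrightarrow> f x \<and>
     W \<longlonglongrightarrow> w \<and> V \<longlonglongrightarrow> v \<and> (\<forall>k. W k \<in> regular_coderivative f (X k) (V k))"
    by blast
next
  assume "\<exists>X W V. X \<longlonglongrightarrow> x \<and> (\<lambda>k. f (X k)) \<longlonglongrightarrow> f x \<and>
     W \<longlonglongrightarrow> w \<and> V \<longlonglongrightarrow> v \<and> (\<forall>k. W k \<in> regular_coderivative f (X k) (V k))"
  then obtain X W V where "X \<longlonglongrightarrow> x" "(\<lambda>k. f (X k)) \<longlonglongrightarrow> f x" "W \<longlonglongrightarrow> w" "V \<longlonglongrightarrow> v"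
    "\<And>k. W k \<in> regular_coderivative f (X k) (V k)" by blast
  then show "w \<in> coderivative (\<lambda>y. {f y}) x (f x) v"
    unfolding coderivative_def limiting_normal_cone_def
    by (intro CollectI exI[of _ "\<lambda>k. (X k, f (X k))"] exI[of _ "\<lambda>k. (W k, - V k)"])
      (auto simp: graph_def regular_coderivative_def intro!: tendsto_intros)
qed

lemma coderivative_in_closed_set:
  assumes w: "w \<in> coderivative (\<lambda>y. {f y}) x (f x) v"
    and "open V" "x \<in> V" "closed S"
    and regular: "\<And>y w v. y \<in> V \<Longrightarrow> w \<in> regular_coderivative f y v \<Longrightarrow> (w, v) \<in> S"
  shows "(w, v) \<in> S"
proof -
  obtain X W U where X: "X \<longlonglongrightarrow> x" and W: "W \<longlonglongrightarrow> w" and U: "U \<longlonglongrightarrow> v"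
    and WU: "\<And>k. W k \<in> regular_coderivative f (X k) (U k)"
    using w unfolding coderivative_graph_iff by blast
  have "eventually (\<lambda>k. X k \<in> V) sequentially"
    using X \<open>open V\<close> \<open>x \<in> V\<close> by (rule topological_tendstoD)
  then have "eventually (\<lambda>k. (W k, U k) \<in> S) sequentially"
    by (rule eventually_mono) (use regular WU in blast)
  then show ?thesis
    using Lim_in_closed_set[OF \<open>closed S\<close> _ _ tendsto_Pair[OF W U]] by simp
qed

lemma coderivative_norm_le:
  assumes "w \<in> coderivative (\<lambda>y. {f y}) x (f x) v"
    and "open V" "x \<in> V" "L-lipschitz_on V f"
  shows "norm w \<le> L * norm v"
proof -
  have "closed {p. norm (fst p) \<le> L * norm (snd p)}"
    by (intro closed_Collect_le continuous_intros)
  from coderivative_in_closed_set[OF assms(1-3) this] show ?thesis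
    using regular_coderivative_norm_le[OF assms(2) _ assms(4)] by simp
qed

lemma coderivative_inner_ge:
  fixes f :: "'a::euclidean_space \<Rightarrow> 'a"
  assumes "w \<in> coderivative (\<lambda>y. {f y}) x (f x) v" "\<delta> > 0"
    and "\<And>y w v. dist y x < \<delta> \<Longrightarrow> w \<in> regular_coderivative f y v \<Longrightarrow> \<kappa> * (norm v)\<^sup>2 \<le> inner w v"
  shows "\<kappa> * (norm v)\<^sup>2 \<le> inner w v"
proof -
  have "closed {p::'a \<times> 'a. \<kappa> * (norm (snd p))\<^sup>2 \<le> inner (fst p) (snd p)}"
    by (intro closed_Collect_le continuous_intros)
  have "(w, v) \<in> {p. \<kappa> * (norm (snd p))\<^sup>2 \<le> inner (fst p) (snd p)}"
  proof (rule coderivative_in_closed_set[OF assms(1) open_ball _ \<open>closed _\<close>])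
    show "x \<in> ball x \<delta>" using \<open>\<delta> > 0\<close> by simp
  qed (use assms(3) in \<open>auto simp: dist_commute\<close>)
  then show ?thesis by simp
qed

lemma lipschitz_on_compact_if_locally_lipschitz:
  assumes "\<forall>x. \<exists>U L. open U \<and> x \<in> U \<and> L-lipschitz_on U f" "compact X"
  obtains L where "L-lipschitz_on X f"
proof -
  have "local_lipschitz {0::real} X (\<lambda>_. f)"
  proof (rule local_lipschitzI)
    fix t :: real and x assume "x \<in> X"
    obtain U L where U: "open U" "x \<in> U" "L-lipschitz_on U f" using assms(1) by blast
    then obtain u where "u > 0" "cball x u \<subseteq> U" using open_contains_cball by blast
    then have "L-lipschitz_on (cball x u \<inter> X) f"
      using lipschitz_on_subset[OF U(3)] by blast
    then show "\<exists>u>0. \<exists>L. \<forall>t\<in>cball t u \<inter> {0}. L-lipschitz_on (cball x u \<inter> X) f"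
      using \<open>u > 0\<close> by blast
  qed
  then show ?thesis
    using local_lipschitz_compact_implies_lipschitz[OF _ assms(2) compact_sing] that by auto
qed

section \<open>Uniform positive-definiteness on a compact set\<close>

lemma coderivative_cluster_point:
  fixes f :: "'a::euclidean_space \<Rightarrow> 'b::euclidean_space"
  assumes "compact K" "continuous_on UNIV f" "open V" "L-lipschitz_on V f"
    and Y: "\<And>n. Y n \<in> K" and X: "\<And>n. X n \<in> V" "(\<lambda>n. X n - Y n) \<longlonglongrightarrow> 0"
    and W: "\<And>n. W n \<in> regular_coderivative f (X n) (U n)" and U: "\<And>n. norm (U n) = 1"
  obtains r y w u where "strict_mono r" "y \<in> K" "norm u = 1"
    "(\<lambda>n. W (r n)) \<longlonglongrightarrow> w" "(\<lambda>n. U (r n)) \<longlonglongrightarrow> u" "w \<in> coderivative (\<lambda>y. {f y}) y (f y) u"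
proof -
  obtain B where B: "\<And>y. y \<in> K \<Longrightarrow> norm y \<le> B"
    using compact_imp_bounded[OF \<open>compact K\<close>] by (auto simp: bounded_iff)
  have "norm (Y n, W n, U n) \<le> B + (L + 1)" for n
  proof -
    have "norm (W n) \<le> L"
      using regular_coderivative_norm_le[OF \<open>open V\<close> X(1) \<open>L-lipschitz_on V f\<close> W] U by simp
    then show ?thesis
      using B[OF Y[of n]] U[of n] norm_Pair_le[of "Y n" "(W n, U n)"] norm_Pair_le[of "W n" "U n"] by linarith
  qed
  then have "bounded (range (\<lambda>n. (Y n, W n, U n)))"
    by (auto simp: bounded_iff)
  then obtain r l where r: "strict_mono r" and lim: "((\<lambda>n. (Y n, W n, U n)) \<circ> r) \<longlonglongrightarrow> l"
    using bounded_imp_convergent_subsequence by blast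
  obtain y w u where l: "l = (y, w, u)" by (metis prod.collapse)
  have Yr: "(\<lambda>n. Y (r n)) \<longlonglongrightarrow> y" and Wr: "(\<lambda>n. W (r n)) \<longlonglongrightarrow> w" and Ur: "(\<lambda>n. U (r n)) \<longlonglongrightarrow> u"
    using tendsto_fst[OF lim] tendsto_fst[OF tendsto_snd[OF lim]] tendsto_snd[OF tendsto_snd[OF lim]]
    by (simp_all add: l o_def)
  have "y \<in> K"
    using Lim_in_closed_set[OF compact_imp_closed[OF \<open>compact K\<close>] _ _ Yr] Y by simp
  have "(\<lambda>n. X (r n) - Y (r n)) \<longlonglongrightarrow> 0"
    using LIMSEQ_subseq_LIMSEQ[OF X(2) r] by (simp add: o_def)
  from tendsto_add[OF this Yr] have Xr: "(\<lambda>n. X (r n)) \<longlonglongrightarrow> y" by simp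
  moreover have "(\<lambda>n. f (X (r n))) \<longlonglongrightarrow> f y"
    by (rule isCont_tendsto_compose[OF _ Xr]) (use assms(2) in \<open>simp add: continuous_on_eq_continuous_at\<close>)
  ultimately have "w \<in> coderivative (\<lambda>y. {f y}) y (f y) u"
    unfolding coderivative_graph_iff
    by (intro exI[of _ "\<lambda>n. X (r n)"] exI[of _ "\<lambda>n. W (r n)"] exI[of _ "\<lambda>n. U (r n)"])
      (simp add: Wr Ur W)
  moreover have "norm u = 1"
    using tendsto_norm[OF Ur] by (simp add: U LIMSEQ_const_iff)
  ultimately show ?thesis
    using that[OF r \<open>y \<in> K\<close> _ Wr Ur] by blast
qed

lemma normalized_regular_coderivative_sequence:
  assumes "\<And>n::nat. \<exists>x y w v. y \<in> K \<and> dist x y < 1 / Suc n \<and> w \<in> regular_coderivative f x v \<and>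
    inner w v < 1 / Suc n * (norm v)\<^sup>2"
  obtains X Y W U where "\<And>n. Y n \<in> K" "\<And>n. dist (X n) (Y n) < 1 / Suc n"
    "\<And>n. W n \<in> regular_coderivative f (X n) (U n)" "\<And>n. norm (U n) = 1"
    "\<And>n. inner (W n) (U n) < 1 / Suc n"
proof -
  define bad where "bad n x y w v \<longleftrightarrow> y \<in> K \<and> dist x y < 1 / Suc n \<and>
      w \<in> regular_coderivative f x v \<and> norm v = 1 \<and> inner w v < 1 / Suc n" for n :: nat and x y w v
  have "\<exists>x y w v. bad n x y w v" for n
  proof -
    obtain x y w v where "y \<in> K" "dist x y < 1 / Suc n" "w \<in> regular_coderivative f x v"
      and less: "inner w v < 1 / Suc n * (norm v)\<^sup>2"
      using assms by blast
    moreover have "v \<noteq> 0" using less by auto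
    ultimately show ?thesis
      using regular_coderivative_scaleR[of w f x v "1 / norm v"] less unfolding bad_def
      by (intro exI[of _ x] exI[of _ y] exI[of _ "w /\<^sub>R norm v"] exI[of _ "v /\<^sub>R norm v"])
        (simp add: divide_simps power2_eq_square)
  qed
  then have "\<exists>X Y W U. \<forall>n. bad n (X n) (Y n) (W n) (U n)"
    by metis
  then show ?thesis
    using that unfolding bad_def by blast
qed

lemma uniform_regular_coderivative_posdef:
  fixes f :: "'a::euclidean_space \<Rightarrow> 'a"
  assumes cont: "continuous_on UNIV f"
    and loclip: "\<forall>x. \<exists>U L. open U \<and> x \<in> U \<and> L-lipschitz_on U f"
    and "compact K"
    and posdef: "\<forall>x\<in>K. \<forall>u z. u \<noteq> 0 \<and> z \<in> coderivative (\<lambda>y. {f y}) x (f x) u \<longrightarrow> 0 < inner z u"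
  obtains \<delta> \<kappa> where "\<delta> > 0" "\<kappa> > 0"
    "\<And>x y w v. y \<in> K \<Longrightarrow> dist x y < \<delta> \<Longrightarrow> w \<in> regular_coderivative f x v \<Longrightarrow> \<kappa> * (norm v)\<^sup>2 \<le> inner w v"
proof -
  obtain B where B: "\<And>y. y \<in> K \<Longrightarrow> norm y \<le> B"
    using compact_imp_bounded[OF \<open>compact K\<close>] by (auto simp: bounded_iff)
  obtain L where "L-lipschitz_on (cball 0 (B + 1)) f"
    using lipschitz_on_compact_if_locally_lipschitz[OF loclip compact_cball] .
  then have L: "L-lipschitz_on (ball 0 (B + 1)) f"
    by (rule lipschitz_on_subset) auto
  have "\<exists>n::nat. \<forall>x y w v. y \<in> K \<longrightarrow> dist x y < 1 / Suc n \<longrightarrow> w \<in> regular_coderivative f x v \<longrightarrow>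
      1 / Suc n * (norm v)\<^sup>2 \<le> inner w v"
  proof (rule ccontr)
    assume bad: "\<not> ?thesis"
    obtain X Y W U where XY: "\<And>n. Y n \<in> K" "\<And>n. dist (X n) (Y n) < 1 / Suc n"
      and W: "\<And>n. W n \<in> regular_coderivative f (X n) (U n)" and U: "\<And>n. norm (U n) = 1"
      and WU: "\<And>n. inner (W n) (U n) < 1 / Suc n"
      using normalized_regular_coderivative_sequence bad[unfolded not_ex not_all not_imp not_le] by metis
    have X: "X n \<in> ball 0 (B + 1)" for n
    proof -
      have "1 / real (Suc n) \<le> 1" by simp
      then have "dist (X n) (Y n) < 1" using XY(2)[of n] by linarith
      then show ?thesis
        using B[OF XY(1)[of n]] norm_triangle_sub[of "X n" "Y n"] by (simp add: dist_norm)
    qed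
    have "(\<lambda>n. X n - Y n) \<longlonglongrightarrow> 0"
      using XY(2) by (intro Lim_null_comparison[OF _ LIMSEQ_inverse_real_of_nat] always_eventually)
        (simp add: dist_norm inverse_eq_divide less_imp_le)
    then obtain r y w u where r: "strict_mono r" and "y \<in> K" "norm u = 1"
      and Wr: "(\<lambda>n. W (r n)) \<longlonglongrightarrow> w" and Ur: "(\<lambda>n. U (r n)) \<longlonglongrightarrow> u"
      and wu: "w \<in> coderivative (\<lambda>y. {f y}) y (f y) u"
      by (rule coderivative_cluster_point[where Y = Y and X = X and W = W and U = U,
          OF \<open>compact K\<close> cont open_ball L XY(1) X _ W U])
    have lim: "(\<lambda>n. 1 / real (Suc (r n))) \<longlonglongrightarrow> 0"
      using LIMSEQ_subseq_LIMSEQ[OF LIMSEQ_inverse_real_of_nat r] by (simp add: o_def inverse_eq_divide)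
    have "inner w u \<le> 0"
    proof (rule tendsto_le[OF _ lim tendsto_inner[OF Wr Ur]])
      show "\<forall>\<^sub>F n in sequentially. inner (W (r n)) (U (r n)) \<le> 1 / real (Suc (r n))"
        by (intro always_eventually allI less_imp_le WU)
    qed simp
    moreover have "u \<noteq> 0" using \<open>norm u = 1\<close> by auto
    then have "0 < inner w u"
      using posdef \<open>y \<in> K\<close> wu by blast
    ultimately show False by simp
  qed
  then obtain n :: nat where "\<forall>x y w v. y \<in> K \<longrightarrow> dist x y < 1 / Suc n \<longrightarrow>
      w \<in> regular_coderivative f x v \<longrightarrow> 1 / Suc n * (norm v)\<^sup>2 \<le> inner w v"
    by blast
  then show ?thesis
    by (intro that[of "1 / Suc n" "1 / Suc n"]) auto
qed

lemma uniform_posdef_second_subdiff: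
  fixes \<phi> :: "'a::euclidean_space \<Rightarrow> real"
  assumes "C11 \<phi>" "compact K"
    and posdef: "\<forall>x\<in>K. \<forall>u z. u \<noteq> 0 \<and> z \<in> second_subdiff \<phi> x u \<longrightarrow> inner z u > 0"
  obtains \<delta> \<kappa> where "\<delta> > 0" "\<kappa> > 0"
    "\<And>x y w v. y \<in> K \<Longrightarrow> dist x y < \<delta> \<Longrightarrow> w \<in> regular_coderivative (grad \<phi>) x v \<Longrightarrow>
      \<kappa> * (norm v)\<^sup>2 \<le> inner w v"
    "\<And>y u z. y \<in> K \<Longrightarrow> z \<in> second_subdiff \<phi> y u \<Longrightarrow> \<kappa> * (norm u)\<^sup>2 \<le> inner z u"
proof -
  have "continuous_on UNIV (grad \<phi>)" "\<forall>x. \<exists>U L. open U \<and> x \<in> U \<and> L-lipschitz_on U (grad \<phi>)"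
    using \<open>C11 \<phi>\<close> by (auto simp: C11_def)
  moreover have "\<forall>x\<in>K. \<forall>u z. u \<noteq> 0 \<and> z \<in> coderivative (\<lambda>y. {grad \<phi> y}) x (grad \<phi> x) u \<longrightarrow> 0 < inner z u"
    using posdef by (simp add: second_subdiff_def)
  ultimately obtain \<delta> \<kappa> where "\<delta> > 0" "\<kappa> > 0" and regular: "\<And>x y w v. y \<in> K \<Longrightarrow> dist x y < \<delta> \<Longrightarrow>
      w \<in> regular_coderivative (grad \<phi>) x v \<Longrightarrow> \<kappa> * (norm v)\<^sup>2 \<le> inner w v"
    using uniform_regular_coderivative_posdef[OF _ _ \<open>compact K\<close>] by blast
  moreover have "\<kappa> * (norm u)\<^sup>2 \<le> inner z u" if "y \<in> K" "z \<in> second_subdiff \<phi> y u" for y u z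
  proof (rule coderivative_inner_ge[OF _ \<open>\<delta> > 0\<close>])
    show "z \<in> coderivative (\<lambda>y. {grad \<phi> y}) y (grad \<phi> y) u"
      using that(2) by (simp add: second_subdiff_def)
    show "\<kappa> * (norm v)\<^sup>2 \<le> inner w v" if "dist y' y < \<delta>" "w \<in> regular_coderivative (grad \<phi>) y' v" for y' w v
      using regular[OF \<open>y \<in> K\<close> that] .
  qed
  ultimately show ?thesis using that by blast
qed

section \<open>An approximate mean-value inequality\<close>

definition axial_coord :: "'a::real_inner \<Rightarrow> 'a \<Rightarrow> 'a \<Rightarrow> real" where
  "axial_coord a h x = inner (x - a) h / inner h h"

definition radial_part :: "'a::real_inner \<Rightarrow> 'a \<Rightarrow> 'a \<Rightarrow> 'a" where
  "radial_part a h x = x - a - axial_coord a h x *\<^sub>R h"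

lemma axial_radial_decomposition: "x = a + axial_coord a h x *\<^sub>R h + radial_part a h x"
  by (simp add: radial_part_def)

lemma inner_radial_part: "h \<noteq> 0 \<Longrightarrow> inner (radial_part a h x) h = 0"
  by (simp add: radial_part_def axial_coord_def inner_diff_left)

lemma axial_coord_eq:
  "h \<noteq> 0 \<Longrightarrow> inner y h = 0 \<Longrightarrow> axial_coord a h (a + t *\<^sub>R h + y) = t"
  by (simp add: axial_coord_def inner_add_left)

lemma radial_part_eq:
  "h \<noteq> 0 \<Longrightarrow> inner y h = 0 \<Longrightarrow> radial_part a h (a + t *\<^sub>R h + y) = y"
  by (simp add: radial_part_def axial_coord_eq)

lemma continuous_on_axial_coord: "continuous_on S (axial_coord a h)"
  unfolding axial_coord_def divide_inverse by (intro continuous_on_mult_right continuous_intros)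

lemma continuous_on_radial_part: "continuous_on S (radial_part a h)"
  unfolding radial_part_def by (intro continuous_intros continuous_on_axial_coord)

definition cylinder :: "'a::real_inner \<Rightarrow> 'a \<Rightarrow> real \<Rightarrow> 'a set" where
  "cylinder a h \<rho> = {x. 0 \<le> axial_coord a h x \<and> axial_coord a h x \<le> 1 \<and> norm (radial_part a h x) \<le> \<rho>}"

lemma cylinder_subset:
  assumes "\<And>t y. 0 \<le> t \<Longrightarrow> t \<le> 1 \<Longrightarrow> norm y \<le> \<rho> \<Longrightarrow> a + t *\<^sub>R h + y \<in> S"
  shows "cylinder a h \<rho> \<subseteq> S"
proof
  fix x assume "x \<in> cylinder a h \<rho>"
  then have "a + axial_coord a h x *\<^sub>R h + radial_part a h x \<in> S"
    using assms by (simp add: cylinder_def)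
  then show "x \<in> S" by (metis axial_radial_decomposition)
qed

lemma compact_cylinder:
  fixes a h :: "'a::euclidean_space"
  shows "compact (cylinder a h \<rho>)"
proof -
  let ?K = "cylinder a h \<rho>"
  have "closed ?K"
    unfolding cylinder_def by (intro closed_Collect_conj closed_Collect_le continuous_intros
        continuous_on_axial_coord continuous_on_radial_part)
  moreover have "norm x \<le> norm a + norm h + \<rho>" if "x \<in> ?K" for x
  proof -
    have "norm x \<le> norm a + \<bar>axial_coord a h x\<bar> * norm h + norm (radial_part a h x)"
      using axial_radial_decomposition[of x a h] norm_triangle_le norm_triangle_ineq
      by (metis add_right_mono norm_scaleR order.trans)
    also have "\<dots> \<le> norm a + norm h + \<rho>"
      using that by (auto simp: cylinder_def intro!: add_mono mult_left_le_one_le)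
    finally show ?thesis .
  qed
  then have "bounded ?K"
    unfolding bounded_iff by blast
  ultimately show ?thesis
    by (simp add: compact_eq_bounded_closed)
qed

text \<open>With \<open>\<mu> = p (a + h) - p a\<close>, subtracting the penalty from \<open>p\<close> levels its values at the two
  ends of the segment; the \<open>\<epsilon>\<close>-term then favours the inside of the segment and the
  \<open>M\<close>-term keeps the minimizer close to its axis.\<close>

definition cylinder_penalty :: "'a::real_inner \<Rightarrow> 'a \<Rightarrow> real \<Rightarrow> real \<Rightarrow> real \<Rightarrow> 'a \<Rightarrow> real" where
  "cylinder_penalty a h \<mu> \<epsilon> M x = \<mu> * axial_coord a h x + \<epsilon> * axial_coord a h x * (1 - axial_coord a h x)
     - M * (norm (radial_part a h x))\<^sup>2"

lemma cylinder_penalty_eq: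
  "h \<noteq> 0 \<Longrightarrow> inner y h = 0 \<Longrightarrow>
    cylinder_penalty a h \<mu> \<epsilon> M (a + t *\<^sub>R h + y) = \<mu> * t + \<epsilon> * t * (1 - t) - M * (norm y)\<^sup>2"
  by (simp add: cylinder_penalty_def axial_coord_eq radial_part_eq)

text \<open>The vector paired with \<open>z - x\<close> is the gradient of the penalty at \<open>x\<close>.\<close>

lemma cylinder_penalty_expansion:
  fixes a h :: "'a::real_inner"
  assumes "h \<noteq> 0" "0 \<le> \<epsilon>" "0 \<le> M"
  shows "inner (((\<mu> + \<epsilon> * (1 - 2 * axial_coord a h x)) / inner h h) *\<^sub>R h - (2 * M) *\<^sub>R radial_part a h x) (z - x)
      - (\<epsilon> / inner h h + M) * (norm (z - x))\<^sup>2
    \<le> cylinder_penalty a h \<mu> \<epsilon> M z - cylinder_penalty a h \<mu> \<epsilon> M x"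
proof -
  define nh where "nh = inner h h"
  have nh: "nh > 0" using \<open>h \<noteq> 0\<close> by (simp add: nh_def)
  define t where "t = axial_coord a h x"
  define y where "y = radial_part a h x"
  define D where "D = z - x"
  define dr where "dr = inner D h / nh"
  define dP where "dP = D - dr *\<^sub>R h"
  have rz: "axial_coord a h z = t + dr"
    using nh by (simp add: axial_coord_def t_def dr_def D_def nh_def inner_diff_left field_simps)
  have Pz: "radial_part a h z = y + dP"
    by (simp add: radial_part_def y_def dP_def D_def rz t_def algebra_simps)
  have dPh: "inner dP h = 0"
    using nh by (simp add: dP_def dr_def nh_def inner_diff_left)
  have yD: "inner y dP = inner y D"
    using inner_radial_part[OF \<open>h \<noteq> 0\<close>] by (simp add: y_def dP_def inner_diff_right inner_commute)
  have nPz: "(norm (radial_part a h z))\<^sup>2 = (norm y)\<^sup>2 + 2 * inner y D + (norm dP)\<^sup>2"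
    by (simp add: Pz power2_norm_eq_inner inner_add_left inner_add_right inner_commute[of dP y] yD)
  have nD: "(norm D)\<^sup>2 = (norm dP)\<^sup>2 + dr\<^sup>2 * nh"
  proof -
    have "(norm D)\<^sup>2 = inner (dP + dr *\<^sub>R h) (dP + dr *\<^sub>R h)"
      by (simp add: dP_def power2_norm_eq_inner)
    also have "\<dots> = inner dP dP + 2 * dr * inner dP h + dr * dr * inner h h"
      by (simp add: inner_add_left inner_add_right inner_commute algebra_simps)
    finally show ?thesis
      using dPh by (simp add: power2_norm_eq_inner[symmetric] nh_def power2_eq_square)
  qed
  have "\<epsilon> * dr\<^sup>2 \<le> \<epsilon> * ((norm D)\<^sup>2 / nh)"
    using nD nh \<open>0 \<le> \<epsilon>\<close> by (intro mult_left_mono) (simp_all add: field_simps)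
  moreover have "M * (norm dP)\<^sup>2 \<le> M * (norm D)\<^sup>2"
    using nD nh \<open>0 \<le> M\<close> by (intro mult_left_mono) simp_all
  moreover have "inner (((\<mu> + \<epsilon> * (1 - 2 * t)) / nh) *\<^sub>R h - (2 * M) *\<^sub>R y) D
      = (\<mu> + \<epsilon> * (1 - 2 * t)) * dr - 2 * M * inner y D"
    by (simp add: dr_def inner_diff_left inner_commute[of _ D] inner_diff_right)
  moreover have "cylinder_penalty a h \<mu> \<epsilon> M z - cylinder_penalty a h \<mu> \<epsilon> M x = (\<mu> + \<epsilon> * (1 - 2 * t)) * dr - 2 * M * inner y D
      - \<epsilon> * dr\<^sup>2 - M * (norm dP)\<^sup>2"
    by (simp add: cylinder_penalty_def rz nPz flip: t_def y_def) (simp add: power2_eq_square algebra_simps)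
  ultimately show ?thesis
    by (simp add: D_def nh_def t_def y_def algebra_simps add_divide_distrib)
qed

lemma lipschitz_penalty_lower_bound:
  fixes p :: "'a::real_normed_vector \<Rightarrow> real"
  assumes "Lp-lipschitz_on S p" "b \<in> S" "b + y \<in> S" "M > 0" "Lp\<^sup>2 < \<epsilon> * M"
  shows "p b - \<epsilon> / 4 < p (b + y) + M * (norm y)\<^sup>2"
proof -
  have "p b - p (b + y) \<le> Lp * norm y"
    using lipschitz_on_normD[OF assms(1-3)] by (simp add: abs_le_iff)
  moreover have "4 * M * (M * (norm y)\<^sup>2 - Lp * norm y) = (2 * M * norm y - Lp)\<^sup>2 - Lp\<^sup>2"
    by (simp add: power2_eq_square algebra_simps)
  then have "4 * M * (M * (norm y)\<^sup>2 - Lp * norm y) > - \<epsilon> * M"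
    using assms(5) zero_le_power2[of "2 * M * norm y - Lp"] by linarith
  then have "M * (4 * (M * (norm y)\<^sup>2 - Lp * norm y) + \<epsilon>) > 0"
    by (simp add: algebra_simps)
  then have "M * (norm y)\<^sup>2 - Lp * norm y > - \<epsilon> / 4"
    using \<open>M > 0\<close> by (simp add: zero_less_mult_iff)
  ultimately show ?thesis by linarith
qed

text \<open>The midpoint condition makes the midpoint of the segment a better competitor than any
  point of the two end faces.\<close>

lemma cylinder_minimizer_interior:
  fixes p :: "'a::euclidean_space \<Rightarrow> real"
  assumes "h \<noteq> 0" "0 < \<rho>" and S: "cylinder a h \<rho> \<subseteq> S" and lip: "Lp-lipschitz_on S p"
    and M: "0 < M" "Lp < M * \<rho>" "Lp\<^sup>2 < \<epsilon> * M"
    and mid: "p (a + (1/2) *\<^sub>R h) \<le> (p a + p (a + h)) / 2"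
    and xs: "xs \<in> cylinder a h \<rho>"
    and min: "\<And>z. z \<in> cylinder a h \<rho> \<Longrightarrow>
      p xs - cylinder_penalty a h (p (a + h) - p a) \<epsilon> M xs \<le> p z - cylinder_penalty a h (p (a + h) - p a) \<epsilon> M z"
  shows "0 < axial_coord a h xs" "axial_coord a h xs < 1" "norm (radial_part a h xs) < \<rho>"
proof -
  define \<mu> where "\<mu> = p (a + h) - p a"
  define q where "q z = p z - cylinder_penalty a h \<mu> \<epsilon> M z" for z
  define t where "t = axial_coord a h xs"
  define y where "y = radial_part a h xs"
  have yh: "inner y h = 0" using inner_radial_part[OF \<open>h \<noteq> 0\<close>] by (simp add: y_def)
  have xs_eq: "xs = a + t *\<^sub>R h + y"
    unfolding t_def y_def by (rule axial_radial_decomposition)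
  have t: "0 \<le> t" "t \<le> 1" and "norm y \<le> \<rho>"
    using xs by (simp_all add: cylinder_def t_def y_def)
  have in_cyl: "a + s *\<^sub>R h + z \<in> cylinder a h \<rho>" if "0 \<le> s" "s \<le> 1" "norm z \<le> \<rho>" "inner z h = 0" for s z
    using that \<open>h \<noteq> 0\<close> by (simp add: cylinder_def axial_coord_eq radial_part_eq)
  have q_eq: "q (a + s *\<^sub>R h + z) = p (a + s *\<^sub>R h + z) - \<mu> * s - \<epsilon> * s * (1 - s) + M * (norm z)\<^sup>2"
    if "inner z h = 0" for s z
    using that \<open>h \<noteq> 0\<close> by (simp add: q_def cylinder_penalty_eq)
  have "q xs \<le> q (a + (1/2) *\<^sub>R h + 0)"
    using min[of "a + (1/2) *\<^sub>R h + 0"] in_cyl[of "1/2" 0] \<open>0 < \<rho>\<close> by (simp add: q_def \<mu>_def)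
  also have "\<dots> \<le> p a - \<epsilon> / 4"
    using mid q_eq[of 0 "1/2"] by (simp add: \<mu>_def field_simps)
  finally have q_xs: "q xs \<le> p a - \<epsilon> / 4" .
  show "norm y < \<rho>"
  proof (rule ccontr)
    assume "\<not> norm y < \<rho>"
    then have "norm y = \<rho>" using \<open>norm y \<le> \<rho>\<close> by simp
    have "p (a + t *\<^sub>R h + 0) - p xs \<le> Lp * norm y"
      using lipschitz_on_normD[OF lip, of "a + t *\<^sub>R h + 0" xs] S in_cyl[OF t, of 0] xs \<open>0 < \<rho>\<close>
      by (auto simp: xs_eq abs_le_iff)
    also have "\<dots> < M * (norm y)\<^sup>2"
      using M \<open>norm y = \<rho>\<close> \<open>0 < \<rho>\<close> by (simp add: power2_eq_square)
    finally have "q (a + t *\<^sub>R h + 0) < q xs"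
      using q_eq[OF yh, of t] q_eq[of 0 t] by (simp add: xs_eq)
    then show False
      using min[of "a + t *\<^sub>R h + 0"] in_cyl[OF t, of 0] \<open>0 < \<rho>\<close> by (simp add: q_def \<mu>_def)
  qed
  show "0 < axial_coord a h xs"
  proof (rule ccontr)
    assume "\<not> 0 < axial_coord a h xs"
    then have "t = 0" using t by (simp add: t_def)
    have "p a - \<epsilon> / 4 < p (a + y) + M * (norm y)\<^sup>2"
      using S in_cyl[of 0 0] in_cyl[of 0 y] \<open>norm y \<le> \<rho>\<close> \<open>0 < \<rho>\<close> yh
      by (intro lipschitz_penalty_lower_bound[OF lip _ _ M(1,3)]) auto
    then show False
      using q_xs q_eq[OF yh, of 0] by (simp add: xs_eq \<open>t = 0\<close>)
  qed
  show "axial_coord a h xs < 1"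
  proof (rule ccontr)
    assume "\<not> axial_coord a h xs < 1"
    then have "t = 1" using t by (simp add: t_def)
    have "p (a + h) - \<epsilon> / 4 < p (a + h + y) + M * (norm y)\<^sup>2"
      using S in_cyl[of 1 0] in_cyl[of 1 y] \<open>norm y \<le> \<rho>\<close> \<open>0 < \<rho>\<close> yh
      by (intro lipschitz_penalty_lower_bound[OF lip _ _ M(1,3)]) auto
    then show False
      using q_xs q_eq[OF yh, of 1] by (simp add: xs_eq \<open>t = 1\<close> \<mu>_def add.assoc)
  qed
qed

text \<open>If \<open>p (a + h) - p a < c\<close>, the minimizer of \<open>p\<close> minus the penalty over the cylinder is an
  interior point at which the penalty's gradient is a proximal subgradient of \<open>p\<close> whose
  pairing with \<open>h\<close> is below \<open>c\<close>.\<close>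

lemma proximal_mean_value_inequality:
  fixes p :: "'a::euclidean_space \<Rightarrow> real"
  assumes "h \<noteq> 0" "0 < \<rho>"
    and cyl: "\<And>t y. 0 \<le> t \<Longrightarrow> t \<le> 1 \<Longrightarrow> norm y \<le> \<rho> \<Longrightarrow> a + t *\<^sub>R h + y \<in> S"
    and lip: "Lp-lipschitz_on S p"
    and prox: "\<And>x w C \<delta>. x \<in> S \<Longrightarrow> 0 < \<delta> \<Longrightarrow>
      (\<And>y. dist y x < \<delta> \<Longrightarrow> inner w (y - x) - C * (norm (y - x))\<^sup>2 \<le> p y - p x) \<Longrightarrow> c \<le> inner w h"
    and mid: "p (a + (1/2) *\<^sub>R h) \<le> (p a + p (a + h)) / 2"
  shows "c \<le> p (a + h) - p a"
proof (rule ccontr)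
  assume "\<not> c \<le> p (a + h) - p a"
  define \<mu> where "\<mu> = p (a + h) - p a"
  define \<epsilon> where "\<epsilon> = (c - \<mu>) / 2"
  have "\<epsilon> > 0" using \<open>\<not> c \<le> p (a + h) - p a\<close> by (simp add: \<epsilon>_def \<mu>_def)
  have "Lp \<ge> 0" using lip lipschitz_on_nonneg by blast
  define M where "M = Lp / \<rho> + Lp\<^sup>2 / \<epsilon> + 1"
  have M: "0 < M" "Lp < M * \<rho>" "Lp\<^sup>2 < \<epsilon> * M"
    using \<open>Lp \<ge> 0\<close> \<open>0 < \<rho>\<close> \<open>\<epsilon> > 0\<close> by (auto simp: M_def algebra_simps add_pos_nonneg)
  define q where "q z = p z - cylinder_penalty a h \<mu> \<epsilon> M z" for z
  have KS: "cylinder a h \<rho> \<subseteq> S"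
    using cylinder_subset[OF cyl] .
  have "continuous_on (cylinder a h \<rho>) q"
    unfolding q_def cylinder_penalty_def
    using continuous_on_subset[OF lipschitz_on_continuous_on[OF lip] KS]
    by (intro continuous_intros continuous_on_axial_coord continuous_on_radial_part)
  moreover have "a \<in> cylinder a h \<rho>"
    using \<open>0 < \<rho>\<close> by (simp add: cylinder_def axial_coord_def radial_part_def)
  ultimately obtain xs where xs: "xs \<in> cylinder a h \<rho>" and min: "\<And>z. z \<in> cylinder a h \<rho> \<Longrightarrow> q xs \<le> q z"
    using continuous_attains_inf[OF compact_cylinder] by blast
  define t where "t = axial_coord a h xs"
  define y where "y = radial_part a h xs"
  have interior: "0 < t" "t < 1" "norm y < \<rho>"
    using cylinder_minimizer_interior[OF \<open>h \<noteq> 0\<close> \<open>0 < \<rho>\<close> KS lip M mid xs] min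
    by (simp_all add: q_def \<mu>_def t_def y_def)
  define U where "U = {x. 0 < axial_coord a h x \<and> axial_coord a h x < 1 \<and> norm (radial_part a h x) < \<rho>}"
  have "open U"
    unfolding U_def
    by (intro open_Collect_conj open_Collect_less continuous_intros
        continuous_on_axial_coord continuous_on_radial_part)
  moreover have "xs \<in> U"
    using interior by (simp add: U_def t_def y_def)
  ultimately obtain \<delta> where "\<delta> > 0" and \<delta>: "ball xs \<delta> \<subseteq> U"
    using open_contains_ball by blast
  define w where "w = ((\<mu> + \<epsilon> * (1 - 2 * t)) / inner h h) *\<^sub>R h - (2 * M) *\<^sub>R y"
  have "inner w (z - xs) - (\<epsilon> / inner h h + M) * (norm (z - xs))\<^sup>2 \<le> p z - p xs"
    if "dist z xs < \<delta>" for z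
  proof -
    have "z \<in> cylinder a h \<rho>"
      using that \<delta> by (auto simp: U_def cylinder_def dist_commute)
    then have "q xs \<le> q z" by (rule min)
    then show ?thesis
      using cylinder_penalty_expansion[where a = a and \<mu> = \<mu> and x = xs and z = z,
          OF \<open>h \<noteq> 0\<close> less_imp_le[OF \<open>\<epsilon> > 0\<close>] less_imp_le[OF M(1)]]
      by (simp add: q_def w_def t_def y_def)
  qed
  then have "c \<le> inner w h"
    using KS xs \<open>\<delta> > 0\<close> by (intro prox[of xs \<delta>]) auto
  also have "inner w h = \<mu> + \<epsilon> * (1 - 2 * t)"
    using inner_radial_part[OF \<open>h \<noteq> 0\<close>] \<open>h \<noteq> 0\<close> by (simp add: w_def y_def inner_diff_left)
  also have "\<dots> < \<mu> + \<epsilon>"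
    using mult_pos_pos[OF \<open>\<epsilon> > 0\<close> \<open>0 < t\<close>] by (simp add: algebra_simps)
  also have "\<dots> < c"
    using \<open>\<epsilon> > 0\<close> by (simp add: \<epsilon>_def field_simps)
  finally have "c < c" .
  then show False by simp
qed

section \<open>Local strong monotonicity of the gradient\<close>

lemma strongly_monotone_along_segment:
  fixes f :: "'a::euclidean_space \<Rightarrow> 'a"
  assumes "\<delta> > 0"
    and posdef: "\<And>x w v. dist x xb < \<delta> \<Longrightarrow> w \<in> regular_coderivative f x v \<Longrightarrow> \<kappa> * (norm v)\<^sup>2 \<le> inner w v"
    and lip: "L-lipschitz_on (ball xb \<delta>) f"
    and a: "a \<in> ball xb (\<delta>/2)" and au: "a + u \<in> ball xb (\<delta>/2)" and "u \<noteq> 0"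
    and mid: "inner u (f (a + (1/2) *\<^sub>R u)) \<le> (inner u (f a) + inner u (f (a + u))) / 2"
  shows "\<kappa> * (norm u)\<^sup>2 \<le> inner u (f (a + u)) - inner u (f a)"
proof (rule proximal_mean_value_inequality[OF \<open>u \<noteq> 0\<close> _ _ _ _ mid])
  show "0 < \<delta> / 4" using \<open>\<delta> > 0\<close> by simp
  show "a + t *\<^sub>R u + y \<in> ball xb \<delta>" if "0 \<le> t" "t \<le> 1" "norm y \<le> \<delta> / 4" for t y
  proof -
    have "a + t *\<^sub>R u = (1 - t) *\<^sub>R a + t *\<^sub>R (a + u)" by (simp add: algebra_simps)
    also have "\<dots> \<in> ball xb (\<delta>/2)"
      using that by (intro convexD[OF convex_ball a au]) auto
    finally show ?thesis
      using that(3) \<open>\<delta> > 0\<close> dist_triangle[of xb "a + t *\<^sub>R u + y" "a + t *\<^sub>R u"]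
      by (simp add: dist_norm)
  qed
  show "(norm u * L)-lipschitz_on (ball xb \<delta>) (\<lambda>x. inner u (f x))"
  proof (rule lipschitz_onI)
    fix x y assume "x \<in> ball xb \<delta>" "y \<in> ball xb \<delta>"
    have "dist (inner u (f x)) (inner u (f y)) \<le> norm u * norm (f x - f y)"
      using Cauchy_Schwarz_ineq2[of u "f x - f y"] by (simp add: dist_real_def inner_diff_right)
    also have "\<dots> \<le> norm u * (L * dist x y)"
      using lipschitz_onD[OF lip \<open>x \<in> ball xb \<delta>\<close> \<open>y \<in> ball xb \<delta>\<close>] by (intro mult_left_mono) (auto simp: dist_norm)
    finally show "dist (inner u (f x)) (inner u (f y)) \<le> norm u * L * dist x y" by (simp add: mult.assoc)
  qed (use lipschitz_on_nonneg[OF lip] in simp)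
  show "\<kappa> * (norm u)\<^sup>2 \<le> inner w u"
    if "x \<in> ball xb \<delta>" "0 < \<delta>'"
      and "\<And>y. dist y x < \<delta>' \<Longrightarrow> inner w (y - x) - C * (norm (y - x))\<^sup>2 \<le> inner u (f y) - inner u (f x)"
    for x w C \<delta>'
    using that by (intro posdef proximal_subgradient_in_regular_coderivative) (auto simp: dist_commute)
qed

lemma local_strong_monotonicity:
  fixes f :: "'a::euclidean_space \<Rightarrow> 'a"
  assumes "\<delta> > 0"
    and posdef: "\<And>x w v. dist x xb < \<delta> \<Longrightarrow> w \<in> regular_coderivative f x v \<Longrightarrow> \<kappa> * (norm v)\<^sup>2 \<le> inner w v"
    and loclip: "\<forall>x. \<exists>U L. open U \<and> x \<in> U \<and> L-lipschitz_on U f"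
    and a: "a \<in> ball xb (\<delta>/2)" and b: "b \<in> ball xb (\<delta>/2)"
  shows "\<kappa> * (norm (b - a))\<^sup>2 \<le> inner (f b - f a) (b - a)"
proof (cases "b = a")
  case False
  obtain L where "L-lipschitz_on (cball xb \<delta>) f"
    using lipschitz_on_compact_if_locally_lipschitz[OF loclip compact_cball] .
  then have lip: "L-lipschitz_on (ball xb \<delta>) f"
    by (rule lipschitz_on_subset) auto
  define h where "h = b - a"
  have "h \<noteq> 0" "b = a + h" "a = b + - h" using False by (simp_all add: h_def)
  have eq: "inner (f b - f a) h = inner h (f b) - inner h (f a)"
    by (simp add: h_def inner_commute inner_diff_right)
  show ?thesis
    unfolding h_def[symmetric] eq
    \<comment> \<open>one of the two orientations of the segment satisfies the midpoint condition\<close>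
  proof (cases "inner h (f (a + (1/2) *\<^sub>R h)) \<le> (inner h (f a) + inner h (f (a + h))) / 2")
    case True
    have "a + h \<in> ball xb (\<delta>/2)" using b \<open>b = a + h\<close> by simp
    with posdef lip a \<open>h \<noteq> 0\<close> True
    have "\<kappa> * (norm h)\<^sup>2 \<le> inner h (f (a + h)) - inner h (f a)"
      by (intro strongly_monotone_along_segment[OF \<open>\<delta> > 0\<close>])
    then show "\<kappa> * (norm h)\<^sup>2 \<le> inner h (f b) - inner h (f a)"
      by (simp add: \<open>b = a + h\<close>)
  next
    case False
    have m: "b + (1/2) *\<^sub>R (- h) = a + (1/2) *\<^sub>R h"
      by (simp add: \<open>b = a + h\<close> algebra_simps scaleR_left_distrib[symmetric])
    have "inner (- h) (f (b + (1/2) *\<^sub>R (- h))) \<le> (inner (- h) (f b) + inner (- h) (f (b + - h))) / 2"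
      unfolding m \<open>a = b + - h\<close>[symmetric] using False by (simp add: \<open>b = a + h\<close>)
    moreover have "b + - h \<in> ball xb (\<delta>/2)" "- h \<noteq> 0" using a \<open>a = b + - h\<close> \<open>h \<noteq> 0\<close> by simp_all
    ultimately have "\<kappa> * (norm (- h))\<^sup>2 \<le> inner (- h) (f (b + - h)) - inner (- h) (f b)"
      using posdef lip b by (intro strongly_monotone_along_segment[OF \<open>\<delta> > 0\<close>])
    then show "\<kappa> * (norm h)\<^sup>2 \<le> inner h (f b) - inner h (f a)"
      by (simp add: \<open>a = b + - h\<close>)
  qed
qed simp

section \<open>Tilt stability\<close>

lemma tilt_argmin_variational_inequality:
  fixes \<phi> :: "'a::euclidean_space \<Rightarrow> real"
  assumes "\<phi> differentiable (at x)" and x: "x \<in> tilt_argmin \<phi> xb \<gamma> v" and y: "y \<in> cball xb \<gamma>"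
  shows "0 \<le> inner (grad \<phi> x - v) (y - x)"
proof (rule ccontr)
  assume neg: "\<not> ?thesis"
  define g where "g t = \<phi> (x + t *\<^sub>R (y - x)) - inner v (x + t *\<^sub>R (y - x))" for t
  have "((\<lambda>t. \<phi> (x + t *\<^sub>R (y - x))) has_real_derivative inner (grad \<phi> x) (y - x)) (at 0)"
    using has_real_derivative_grad_along_line[where t = 0] assms(1) by simp
  then have "(g has_real_derivative inner (grad \<phi> x) (y - x) - inner v (y - x)) (at 0)"
    unfolding g_def by (auto intro!: derivative_eq_intros simp: inner_add_right)
  moreover have "inner (grad \<phi> x) (y - x) - inner v (y - x) < 0"
    using neg by (simp add: inner_diff_left)
  ultimately obtain e where "e > 0" and dec: "\<And>s. 0 < s \<Longrightarrow> s < e \<Longrightarrow> g s < g 0"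
    using DERIV_neg_dec_right by (metis add_0)
  define s where "s = min (e / 2) 1"
  have s: "0 < s" "s < e" "s \<le> 1" using \<open>e > 0\<close> by (auto simp: s_def)
  have "x \<in> cball xb \<gamma>" using x by (simp add: tilt_argmin_def)
  then have "(1 - s) *\<^sub>R x + s *\<^sub>R y \<in> cball xb \<gamma>"
    using s y by (intro convexD[OF convex_cball]) auto
  moreover have "(1 - s) *\<^sub>R x + s *\<^sub>R y = x + s *\<^sub>R (y - x)" by (simp add: algebra_simps)
  ultimately have "g 0 \<le> g s" using x by (simp add: tilt_argmin_def g_def)
  with dec[OF s(1,2)] show False by simp
qed

lemma variational_inequality_solution_lipschitz:
  fixes F :: "'a::real_inner \<Rightarrow> 'a"
  assumes "x1 \<in> C" "x2 \<in> C"
    and "\<And>y. y \<in> C \<Longrightarrow> 0 \<le> inner (F x1 - v1) (y - x1)"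
    and "\<And>y. y \<in> C \<Longrightarrow> 0 \<le> inner (F x2 - v2) (y - x2)"
    and "\<kappa> * (norm (x2 - x1))\<^sup>2 \<le> inner (F x2 - F x1) (x2 - x1)"
  shows "\<kappa> * norm (x2 - x1) \<le> norm (v2 - v1)"
proof -
  have "0 \<le> inner (F x1 - v1) (x2 - x1)" "0 \<le> - inner (F x2 - v2) (x2 - x1)"
    using assms(1-4) by (metis inner_minus_right minus_diff_eq)+
  with assms(5) have "\<kappa> * (norm (x2 - x1))\<^sup>2 \<le> inner (v2 - v1) (x2 - x1)"
    by (simp add: inner_diff_left)
  also have "\<dots> \<le> norm (v2 - v1) * norm (x2 - x1)"
    using Cauchy_Schwarz_ineq2[of "v2 - v1" "x2 - x1"] by simp
  finally show ?thesis
    by (cases "x2 = x1") (auto simp: power2_eq_square mult.assoc[symmetric])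
qed

lemma tilt_stable_if_strongly_monotone:
  fixes \<phi> :: "'a::euclidean_space \<Rightarrow> real"
  assumes diff: "\<forall>x. \<phi> differentiable (at x)"
    and "grad \<phi> xb = 0" "\<gamma> > 0" "\<kappa> > 0"
    and SM: "\<And>a b. a \<in> cball xb \<gamma> \<Longrightarrow> b \<in> cball xb \<gamma> \<Longrightarrow>
      \<kappa> * (norm (b - a))\<^sup>2 \<le> inner (grad \<phi> b - grad \<phi> a) (b - a)"
  shows "tilt_stable_local_min \<phi> xb"
proof -
  let ?A = "tilt_argmin \<phi> xb \<gamma>"
  define S where "S v = {x \<in> cball xb \<gamma>. \<forall>y\<in>cball xb \<gamma>. 0 \<le> inner (grad \<phi> x - v) (y - x)}" for v
  have AS: "?A v \<subseteq> S v" for v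
  proof
    fix x assume "x \<in> ?A v"
    with tilt_argmin_variational_inequality[OF _ this] diff show "x \<in> S v"
      by (auto simp: S_def tilt_argmin_def)
  qed
  have "xb \<in> S 0"
    using \<open>grad \<phi> xb = 0\<close> \<open>\<gamma> > 0\<close> by (simp add: S_def)
  have lip: "\<kappa> * norm (x2 - x1) \<le> norm (v2 - v1)" if "x1 \<in> S v1" "x2 \<in> S v2" for x1 x2 v1 v2
  proof -
    have x: "x1 \<in> cball xb \<gamma>" "x2 \<in> cball xb \<gamma>"
      and "\<And>y. y \<in> cball xb \<gamma> \<Longrightarrow> 0 \<le> inner (grad \<phi> x1 - v1) (y - x1)"
      and "\<And>y. y \<in> cball xb \<gamma> \<Longrightarrow> 0 \<le> inner (grad \<phi> x2 - v2) (y - x2)"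
      using that unfolding S_def by blast+
    from variational_inequality_solution_lipschitz[OF this SM[OF x]] show ?thesis .
  qed
  have cont: "continuous_on (cball xb \<gamma>) (\<lambda>y. \<phi> y - inner v y)" for v
    using diff by (intro continuous_intros differentiable_imp_continuous_on differentiable_at_imp_differentiable_on) auto
  have "\<exists>x. x \<in> ?A v" for v
    using continuous_attains_inf[OF compact_cball _ cont[of v]] \<open>\<gamma> > 0\<close>
    unfolding tilt_argmin_def by auto
  then obtain m where m: "\<And>v. m v \<in> ?A v" by metis
  have single: "?A v = {m v}" for v
  proof
    show "?A v \<subseteq> {m v}"
    proof
      fix x assume "x \<in> ?A v"
      from lip[OF subsetD[OF AS this] subsetD[OF AS m[of v]]]
      have "\<kappa> * norm (m v - x) \<le> norm (v - v)" .
      then show "x \<in> {m v}" using \<open>\<kappa> > 0\<close> by (simp add: mult_le_0_iff)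
    qed
  qed (use m in simp)
  from lip[OF subsetD[OF AS m[of 0]] \<open>xb \<in> S 0\<close>]
  have "m 0 = xb" using \<open>\<kappa> > 0\<close> by (simp add: mult_le_0_iff)
  moreover have "(1 / \<kappa>)-lipschitz_on UNIV m"
  proof (rule lipschitz_onI)
    fix v1 v2
    from lip[OF subsetD[OF AS m[of v1]] subsetD[OF AS m[of v2]]]
    show "dist (m v1) (m v2) \<le> 1 / \<kappa> * dist v1 v2"
      using \<open>\<kappa> > 0\<close> by (simp add: dist_norm norm_minus_commute field_simps)
  qed (use \<open>\<kappa> > 0\<close> in simp)
  ultimately show ?thesis
    unfolding tilt_stable_local_min_def using single \<open>\<gamma> > 0\<close> by (metis open_UNIV UNIV_I)
qed

section \<open>The damped Newton iteration\<close>

definition gdna_step :: "('a::euclidean_space \<Rightarrow> real) \<Rightarrow> real \<Rightarrow> real \<Rightarrow> 'a \<Rightarrow> 'a \<Rightarrow> bool" where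
  "gdna_step \<phi> \<sigma> \<beta> x x' \<longleftrightarrow> (if grad \<phi> x = 0 then x' = x
     else (\<exists>d j. - grad \<phi> x \<in> second_subdiff \<phi> x d \<and> armijo \<phi> \<sigma> \<beta> x d j \<and>
             (\<forall>i<j. \<not> armijo \<phi> \<sigma> \<beta> x d i) \<and> x' = x + (\<beta> ^ j) *\<^sub>R d))"

lemma gdna_sequence_iff:
  "gdna_sequence \<phi> \<sigma> \<beta> x0 x \<longleftrightarrow> x 0 = x0 \<and> (\<forall>k. gdna_step \<phi> \<sigma> \<beta> (x k) (x (Suc k)))"
  by (simp add: gdna_sequence_def gdna_step_def)

lemma armijo_step_lower_bound:
  fixes \<phi> :: "'a::euclidean_space \<Rightarrow> real"
  assumes diff: "\<forall>x. \<phi> differentiable (at x)"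
    and "0 < \<sigma>" "\<sigma> < 1" "0 < \<beta>" "\<beta> < 1" "0 < L"
    and lip: "L-lipschitz_on (cball x (norm d)) (grad \<phi>)"
    and descent: "\<kappa> * (norm d)\<^sup>2 \<le> - inner (grad \<phi> x) d"
    and first: "\<And>i. i < j \<Longrightarrow> \<not> armijo \<phi> \<sigma> \<beta> x d i"
  shows "min 1 (\<beta> * (1 - \<sigma>) * \<kappa> / L) \<le> \<beta> ^ j"
proof (cases j)
  case (Suc i)
  define t where "t = \<beta> ^ i"
  have t: "0 < t" "t \<le> 1" using \<open>0 < \<beta>\<close> \<open>\<beta> < 1\<close> by (simp_all add: t_def power_le_one)
  obtain s where s: "0 \<le> s" "s \<le> 1"
    and mvt: "\<phi> (x + t *\<^sub>R d) - \<phi> x = inner (grad \<phi> (x + s *\<^sub>R (t *\<^sub>R d))) (t *\<^sub>R d)"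
    using grad_mean_value[OF diff] by blast
  define \<xi> where "\<xi> = x + s *\<^sub>R (t *\<^sub>R d)"
  have "\<phi> x + \<sigma> * t * inner (grad \<phi> x) d < \<phi> (x + t *\<^sub>R d)"
    using first[of i] Suc by (simp add: armijo_def t_def)
  then have "t * (\<sigma> * inner (grad \<phi> x) d) < t * inner (grad \<phi> \<xi>) d"
    using mvt by (simp add: \<xi>_def algebra_simps)
  then have "\<sigma> * inner (grad \<phi> x) d < inner (grad \<phi> \<xi>) d"
    using t by simp
  moreover have "(1 - \<sigma>) * (\<kappa> * (norm d)\<^sup>2) \<le> (1 - \<sigma>) * - inner (grad \<phi> x) d"
    using descent \<open>\<sigma> < 1\<close> by (intro mult_left_mono) auto
  ultimately have "(1 - \<sigma>) * \<kappa> * (norm d)\<^sup>2 < inner (grad \<phi> \<xi> - grad \<phi> x) d"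
    by (simp add: inner_diff_left algebra_simps)
  also have "\<dots> \<le> norm (grad \<phi> \<xi> - grad \<phi> x) * norm d"
    using Cauchy_Schwarz_ineq2[of "grad \<phi> \<xi> - grad \<phi> x" d] by simp
  also have "\<dots> \<le> L * norm (\<xi> - x) * norm d"
  proof -
    have "s * t \<le> 1" using s t by (simp add: mult_le_one)
    then have "norm (\<xi> - x) \<le> norm d"
      using s t by (simp add: \<xi>_def mult_left_le_one_le)
    then show ?thesis
      using lipschitz_on_normD[OF lip, of \<xi> x] by (intro mult_right_mono) (auto simp: dist_norm norm_minus_commute)
  qed
  also have "\<dots> \<le> (L * t) * (norm d)\<^sup>2"
    using s t \<open>0 < L\<close> by (simp add: \<xi>_def power2_eq_square mult_left_le_one_le mult_right_mono)
  finally have "(1 - \<sigma>) * \<kappa> < L * t"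
    by (cases "d = 0") (simp_all add: mult_less_cancel_right)
  then have "\<beta> * ((1 - \<sigma>) * \<kappa> / L) < \<beta> * t"
    using \<open>0 < L\<close> \<open>0 < \<beta>\<close> by (simp add: pos_divide_less_eq mult.commute)
  then show ?thesis
    by (simp add: Suc t_def)
qed simp

lemma newton_direction_bounds:
  fixes \<phi> :: "'a::euclidean_space \<Rightarrow> real"
  assumes "0 < \<kappa>" and lip: "L-lipschitz_on (ball x \<rho>) (grad \<phi>)" and "norm (grad \<phi> x) / \<kappa> < \<rho>"
    and posdef: "\<And>u z. z \<in> second_subdiff \<phi> x u \<Longrightarrow> \<kappa> * (norm u)\<^sup>2 \<le> inner z u"
    and newton: "- grad \<phi> x \<in> second_subdiff \<phi> x d"
  shows "\<kappa> * (norm d)\<^sup>2 \<le> - inner (grad \<phi> x) d" "norm (grad \<phi> x) \<le> L * norm d" "norm d < \<rho>"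
proof -
  show descent: "\<kappa> * (norm d)\<^sup>2 \<le> - inner (grad \<phi> x) d"
    using posdef[OF newton] by simp
  have "0 \<le> norm (grad \<phi> x) / \<kappa>" using \<open>0 < \<kappa>\<close> by simp
  then have "x \<in> ball x \<rho>" using \<open>norm (grad \<phi> x) / \<kappa> < \<rho>\<close> by simp
  then show "norm (grad \<phi> x) \<le> L * norm d"
    using coderivative_norm_le[OF newton[unfolded second_subdiff_def] open_ball _ lip] by simp
  have "\<kappa> * norm d * norm d \<le> norm (grad \<phi> x) * norm d"
    using descent Cauchy_Schwarz_ineq2[of "grad \<phi> x" d] by (simp add: power2_eq_square)
  then have "\<kappa> * norm d \<le> norm (grad \<phi> x)"
    by (cases "d = 0") auto
  also have "\<dots> < \<kappa> * \<rho>"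
    using \<open>norm (grad \<phi> x) / \<kappa> < \<rho>\<close> \<open>0 < \<kappa>\<close> by (simp add: field_simps)
  finally show "norm d < \<rho>"
    using \<open>0 < \<kappa>\<close> by simp
qed

lemma gdna_step_estimate:
  fixes \<phi> :: "'a::euclidean_space \<Rightarrow> real"
  assumes diff: "\<forall>x. \<phi> differentiable (at x)"
    and \<sigma>: "0 < \<sigma>" "\<sigma> < 1" and \<beta>: "0 < \<beta>" "\<beta> < 1" and "0 < \<kappa>" "0 < L"
    and lip: "L-lipschitz_on (ball x \<rho>) (grad \<phi>)" and "norm (grad \<phi> x) / \<kappa> < \<rho>"
    and posdef: "\<And>u z. z \<in> second_subdiff \<phi> x u \<Longrightarrow> \<kappa> * (norm u)\<^sup>2 \<le> inner z u"
    and step: "gdna_step \<phi> \<sigma> \<beta> x x'"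
  shows "\<phi> x' \<le> \<phi> x - \<sigma> * \<kappa> * (norm (x' - x))\<^sup>2"
    and "(norm (grad \<phi> x))\<^sup>2 \<le> L\<^sup>2 / (min 1 (\<beta> * (1 - \<sigma>) * \<kappa> / L) * \<sigma> * \<kappa>) * (\<phi> x - \<phi> x')"
proof -
  define \<tau>\<^sub>0 where "\<tau>\<^sub>0 = min 1 (\<beta> * (1 - \<sigma>) * \<kappa> / L)"
  have "\<phi> x' \<le> \<phi> x - \<sigma> * \<kappa> * (norm (x' - x))\<^sup>2 \<and>
      (norm (grad \<phi> x))\<^sup>2 \<le> L\<^sup>2 / (\<tau>\<^sub>0 * \<sigma> * \<kappa>) * (\<phi> x - \<phi> x')"
  proof (cases "grad \<phi> x = 0")
    case True
    then show ?thesis using step by (simp add: gdna_step_def)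
  next
    case False
    then obtain d j where newton: "- grad \<phi> x \<in> second_subdiff \<phi> x d" and arm: "armijo \<phi> \<sigma> \<beta> x d j"
      and first: "\<And>i. i < j \<Longrightarrow> \<not> armijo \<phi> \<sigma> \<beta> x d i" and x': "x' = x + (\<beta> ^ j) *\<^sub>R d"
      using step by (auto simp: gdna_step_def)
    note d = newton_direction_bounds[OF \<open>0 < \<kappa>\<close> lip \<open>norm (grad \<phi> x) / \<kappa> < \<rho>\<close> posdef newton]
    define \<tau> where "\<tau> = \<beta> ^ j"
    have \<tau>: "0 < \<tau>" "\<tau> \<le> 1" using \<beta> by (simp_all add: \<tau>_def power_le_one)
    have "L-lipschitz_on (cball x (norm d)) (grad \<phi>)"
      using d(3) by (intro lipschitz_on_subset[OF lip]) auto
    then have "\<tau>\<^sub>0 \<le> \<tau>"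
      unfolding \<tau>\<^sub>0_def \<tau>_def using diff \<sigma> \<beta> \<open>0 < L\<close> d(1) first by (intro armijo_step_lower_bound)
    have "\<phi> x' \<le> \<phi> x + \<sigma> * \<tau> * inner (grad \<phi> x) d"
      using arm by (simp add: armijo_def x' \<tau>_def)
    also have "\<dots> \<le> \<phi> x - \<sigma> * \<kappa> * (\<tau> * (norm d)\<^sup>2)"
      using mult_left_mono[OF d(1), of "\<sigma> * \<tau>"] \<sigma> \<tau> by (simp add: algebra_simps)
    finally have decrease: "\<phi> x' \<le> \<phi> x - \<sigma> * \<kappa> * (\<tau> * (norm d)\<^sup>2)" .
    have "(norm (x' - x))\<^sup>2 = \<tau>\<^sup>2 * (norm d)\<^sup>2"
      using \<tau> by (simp add: x' \<tau>_def[symmetric] power_mult_distrib)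
    also have "\<dots> \<le> \<tau> * (norm d)\<^sup>2"
      using \<tau> by (intro mult_right_mono) (simp_all add: power2_eq_square mult_left_le_one_le)
    finally have "\<sigma> * \<kappa> * (norm (x' - x))\<^sup>2 \<le> \<sigma> * \<kappa> * (\<tau> * (norm d)\<^sup>2)"
      using \<sigma> \<open>0 < \<kappa>\<close> by (intro mult_left_mono) simp_all
    moreover have "\<sigma> * \<kappa> * (\<tau>\<^sub>0 * (norm d)\<^sup>2) \<le> \<sigma> * \<kappa> * (\<tau> * (norm d)\<^sup>2)"
      using \<open>\<tau>\<^sub>0 \<le> \<tau>\<close> \<sigma> \<open>0 < \<kappa>\<close> by (intro mult_left_mono mult_right_mono) simp_all
    then have "L\<^sup>2 * (\<sigma> * \<kappa> * (\<tau>\<^sub>0 * (norm d)\<^sup>2)) \<le> L\<^sup>2 * (\<phi> x - \<phi> x')"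
      using decrease by (intro mult_left_mono) simp_all
    then have "L\<^sup>2 * (norm d)\<^sup>2 \<le> L\<^sup>2 / (\<tau>\<^sub>0 * \<sigma> * \<kappa>) * (\<phi> x - \<phi> x')"
      using \<sigma> \<beta> \<open>0 < \<kappa>\<close> \<open>0 < L\<close> by (simp add: \<tau>\<^sub>0_def field_simps)
    moreover have "(norm (grad \<phi> x))\<^sup>2 \<le> L\<^sup>2 * (norm d)\<^sup>2"
      using d(2) by (simp add: power_mult_distrib[symmetric] power_mono)
    ultimately show ?thesis
      using decrease by linarith
  qed
  then show "\<phi> x' \<le> \<phi> x - \<sigma> * \<kappa> * (norm (x' - x))\<^sup>2"
    and "(norm (grad \<phi> x))\<^sup>2 \<le> L\<^sup>2 / (min 1 (\<beta> * (1 - \<sigma>) * \<kappa> / L) * \<sigma> * \<kappa>) * (\<phi> x - \<phi> x')"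
    by (simp_all add: \<tau>\<^sub>0_def)
qed

lemma sufficient_decrease_tendsto_zero:
  fixes a :: "nat \<Rightarrow> real" and u :: "nat \<Rightarrow> 'a::real_normed_vector"
  assumes "0 < C" and decrease: "\<And>k. (norm (u k))\<^sup>2 \<le> C * (a k - a (Suc k))" and "\<And>k. B \<le> a k"
  shows "u \<longlonglongrightarrow> 0"
proof -
  have "a (Suc k) \<le> a k" for k
  proof -
    have "0 \<le> C * (a k - a (Suc k))"
      using decrease[of k] zero_le_power2[of "norm (u k)"] by linarith
    then show ?thesis using \<open>0 < C\<close> by (simp add: zero_le_mult_iff)
  qed
  then have "decseq a" by (simp add: decseq_Suc_iff)
  then obtain l where "a \<longlonglongrightarrow> l"
    using decseq_convergent[of a B] assms(3) by blast
  then have "(\<lambda>k. a k - a (Suc k)) \<longlonglongrightarrow> l - l"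
    by (intro tendsto_diff LIMSEQ_Suc)
  from tendsto_real_sqrt[OF tendsto_mult[OF tendsto_const this]]
  have "(\<lambda>k. sqrt (C * (a k - a (Suc k)))) \<longlonglongrightarrow> 0"
    by simp
  moreover have "norm (u k) \<le> sqrt (C * (a k - a (Suc k)))" for k
    using decrease[of k] by (simp add: real_le_rsqrt)
  ultimately show ?thesis
    by (intro Lim_null_comparison[OF always_eventually, of u]) auto
qed

lemma gdna_step_estimate_on_level_set:
  fixes \<phi> :: "'a::euclidean_space \<Rightarrow> real"
  assumes "C11 \<phi>" and \<sigma>: "0 < \<sigma>" "\<sigma> < 1" and \<beta>: "0 < \<beta>" "\<beta> < 1" and "0 < \<kappa>"
    and "compact {x. \<phi> x \<le> \<phi> x0}"
    and posdef: "\<And>y u z. \<phi> y \<le> \<phi> x0 \<Longrightarrow> z \<in> second_subdiff \<phi> y u \<Longrightarrow> \<kappa> * (norm u)\<^sup>2 \<le> inner z u"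
  obtains C where "0 < C"
    "\<And>x x'. \<phi> x \<le> \<phi> x0 \<Longrightarrow> gdna_step \<phi> \<sigma> \<beta> x x' \<Longrightarrow>
      \<phi> x' \<le> \<phi> x - \<sigma> * \<kappa> * (norm (x' - x))\<^sup>2 \<and> (norm (grad \<phi> x))\<^sup>2 \<le> C * (\<phi> x - \<phi> x')"
proof -
  define \<Omega> where "\<Omega> = {x. \<phi> x \<le> \<phi> x0}"
  have diff: "\<forall>x. \<phi> differentiable (at x)" and "continuous_on UNIV (grad \<phi>)"
    and loclip: "\<forall>x. \<exists>U L. open U \<and> x \<in> U \<and> L-lipschitz_on U (grad \<phi>)"
    using \<open>C11 \<phi>\<close> by (auto simp: C11_def)
  have "compact \<Omega>" using assms(7) by (simp add: \<Omega>_def)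
  obtain R where R: "\<And>y. y \<in> \<Omega> \<Longrightarrow> norm y \<le> R"
    using compact_imp_bounded[OF \<open>compact \<Omega>\<close>] by (auto simp: bounded_iff)
  obtain G where G: "\<And>y. y \<in> \<Omega> \<Longrightarrow> norm (grad \<phi> y) \<le> G"
    using compact_imp_bounded[OF compact_continuous_image[OF continuous_on_subset[OF \<open>continuous_on UNIV (grad \<phi>)\<close>] \<open>compact \<Omega>\<close>]]
    by (auto simp: bounded_iff)
  obtain L' where "L'-lipschitz_on (cball 0 (R + G / \<kappa> + 1)) (grad \<phi>)"
    using lipschitz_on_compact_if_locally_lipschitz[OF loclip compact_cball] .
  moreover from this have "0 \<le> L'" by (rule lipschitz_on_nonneg)
  ultimately have L: "(L' + 1)-lipschitz_on (cball 0 (R + G / \<kappa> + 1)) (grad \<phi>)" "0 < L' + 1"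
    by (auto intro: lipschitz_on_le)
  define C where "C = (L' + 1)\<^sup>2 / (min 1 (\<beta> * (1 - \<sigma>) * \<kappa> / (L' + 1)) * \<sigma> * \<kappa>)"
  have "0 < C" using \<sigma> \<beta> \<open>0 < \<kappa>\<close> L(2) by (simp add: C_def)
  moreover have "\<phi> x' \<le> \<phi> x - \<sigma> * \<kappa> * (norm (x' - x))\<^sup>2 \<and> (norm (grad \<phi> x))\<^sup>2 \<le> C * (\<phi> x - \<phi> x')"
    if "x \<in> \<Omega>" "gdna_step \<phi> \<sigma> \<beta> x x'" for x x'
  proof -
    have "ball x (G / \<kappa> + 1) \<subseteq> cball 0 (R + G / \<kappa> + 1)"
    proof
      fix y assume "y \<in> ball x (G / \<kappa> + 1)"
      then show "y \<in> cball 0 (R + G / \<kappa> + 1)"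
        using R[OF that(1)] norm_triangle_sub[of y x] by (simp add: dist_norm norm_minus_commute)
    qed
    then have "(L' + 1)-lipschitz_on (ball x (G / \<kappa> + 1)) (grad \<phi>)"
      using lipschitz_on_subset[OF L(1)] by blast
    moreover have "norm (grad \<phi> x) / \<kappa> < G / \<kappa> + 1"
      using divide_right_mono[OF G[OF that(1)], of \<kappa>] \<open>0 < \<kappa>\<close> by simp
    moreover have "\<And>u z. z \<in> second_subdiff \<phi> x u \<Longrightarrow> \<kappa> * (norm u)\<^sup>2 \<le> inner z u"
      using posdef that(1) by (simp add: \<Omega>_def)
    ultimately show ?thesis
      unfolding C_def using that(2) by (intro conjI gdna_step_estimate[OF diff \<sigma> \<beta> \<open>0 < \<kappa>\<close> L(2)])
  qed
  ultimately show ?thesis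
    using that unfolding \<Omega>_def by blast
qed

lemma gdna_sequence_limits:
  fixes \<phi> :: "'a::euclidean_space \<Rightarrow> real"
  assumes "C11 \<phi>" and \<sigma>: "0 < \<sigma>" "\<sigma> < 1" and \<beta>: "0 < \<beta>" "\<beta> < 1" and "0 < \<kappa>"
    and "compact {x. \<phi> x \<le> \<phi> x0}"
    and posdef: "\<And>y u z. \<phi> y \<le> \<phi> x0 \<Longrightarrow> z \<in> second_subdiff \<phi> y u \<Longrightarrow> \<kappa> * (norm u)\<^sup>2 \<le> inner z u"
    and "gdna_sequence \<phi> \<sigma> \<beta> x0 x"
  shows "\<And>k. \<phi> (x k) \<le> \<phi> x0" and "(\<lambda>k. grad \<phi> (x k)) \<longlonglongrightarrow> 0" and "(\<lambda>k. x (Suc k) - x k) \<longlonglongrightarrow> 0"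
proof -
  obtain C where "0 < C" and estimate: "\<And>x x'. \<phi> x \<le> \<phi> x0 \<Longrightarrow> gdna_step \<phi> \<sigma> \<beta> x x' \<Longrightarrow>
      \<phi> x' \<le> \<phi> x - \<sigma> * \<kappa> * (norm (x' - x))\<^sup>2 \<and> (norm (grad \<phi> x))\<^sup>2 \<le> C * (\<phi> x - \<phi> x')"
    using gdna_step_estimate_on_level_set[OF assms(1-7)] posdef by blast
  have x0: "x 0 = x0" and steps: "\<And>k. gdna_step \<phi> \<sigma> \<beta> (x k) (x (Suc k))"
    using \<open>gdna_sequence \<phi> \<sigma> \<beta> x0 x\<close> by (simp_all add: gdna_sequence_iff)
  show level: "\<phi> (x k) \<le> \<phi> x0" for k
  proof (induction k)
    case (Suc k)
    have "0 \<le> \<sigma> * \<kappa> * (norm (x (Suc k) - x k))\<^sup>2" using \<sigma> \<open>0 < \<kappa>\<close> by simp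
    then show ?case using estimate[OF Suc steps] Suc by linarith
  qed (simp add: x0)
  note step = estimate[OF level steps]
  have "continuous_on {x. \<phi> x \<le> \<phi> x0} \<phi>"
    using \<open>C11 \<phi>\<close> unfolding C11_def
    by (intro differentiable_imp_continuous_on differentiable_at_imp_differentiable_on) auto
  then obtain y where "\<forall>z\<in>{x. \<phi> x \<le> \<phi> x0}. \<phi> y \<le> \<phi> z"
    using continuous_attains_inf[OF \<open>compact _\<close>] level by blast
  then have bdd: "\<phi> y \<le> \<phi> (x k)" for k using level by blast
  show "(\<lambda>k. grad \<phi> (x k)) \<longlonglongrightarrow> 0"
    using \<open>0 < C\<close> step bdd by (intro sufficient_decrease_tendsto_zero[where a = "\<lambda>k. \<phi> (x k)"]) auto
  have "(norm (x (Suc k) - x k))\<^sup>2 \<le> 1 / (\<sigma> * \<kappa>) * (\<phi> (x k) - \<phi> (x (Suc k)))" for k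
    using step[of k] \<sigma> \<open>0 < \<kappa>\<close> by (simp add: field_simps)
  then show "(\<lambda>k. x (Suc k) - x k) \<longlonglongrightarrow> 0"
    using \<sigma> \<open>0 < \<kappa>\<close> bdd
    by (intro sufficient_decrease_tendsto_zero[where a = "\<lambda>k. \<phi> (x k)" and C = "1 / (\<sigma> * \<kappa>)"]) auto
qed

lemma tendsto_of_local_error_bound:
  fixes x :: "nat \<Rightarrow> 'a::real_normed_vector" and f :: "'a \<Rightarrow> 'b::real_normed_vector"
  assumes f: "(\<lambda>k. f (x k)) \<longlonglongrightarrow> 0" and steps: "(\<lambda>k. x (Suc k) - x k) \<longlonglongrightarrow> 0"
    and r: "strict_mono r" "(\<lambda>n. x (r n)) \<longlonglongrightarrow> xb"
    and "0 < \<rho>" "0 < \<kappa>"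
    and bound: "\<And>y. y \<in> ball xb \<rho> \<Longrightarrow> \<kappa> * norm (y - xb) \<le> norm (f y)"
  shows "x \<longlonglongrightarrow> xb"
proof -
  have "\<forall>\<^sub>F k in sequentially. norm (x (Suc k) - x k) < \<rho> / 2 \<and> norm (f (x k)) < \<kappa> * \<rho> / 2"
    using tendstoD[OF steps, of "\<rho> / 2"] tendstoD[OF f, of "\<kappa> * \<rho> / 2"] \<open>0 < \<rho>\<close> \<open>0 < \<kappa>\<close>
    by (auto simp: dist_norm intro: eventually_conj)
  then obtain N where N: "\<And>k. N \<le> k \<Longrightarrow> norm (x (Suc k) - x k) < \<rho> / 2 \<and> norm (f (x k)) < \<kappa> * \<rho> / 2"
    by (auto simp: eventually_sequentially)
  obtain M where M: "\<And>n. M \<le> n \<Longrightarrow> dist (x (r n)) xb < \<rho> / 2"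
    using tendstoD[OF r(2), of "\<rho> / 2"] \<open>0 < \<rho>\<close> by (auto simp: eventually_sequentially)
  define k\<^sub>0 where "k\<^sub>0 = r (max M N)"
  have "N \<le> k\<^sub>0"
    using seq_suble[OF r(1), of "max M N"] by (simp add: k\<^sub>0_def)
  have near: "dist (x k) xb < \<rho> / 2" if "k\<^sub>0 \<le> k" for k
    using that
  proof (induction k rule: dec_induct)
    case base
    then show ?case using M[of "max M N"] by (simp add: k\<^sub>0_def)
  next
    case (step k)
    then have "N \<le> k" using \<open>N \<le> k\<^sub>0\<close> by simp
    have "dist (x (Suc k)) xb \<le> dist (x k) xb + norm (x (Suc k) - x k)"
      by (metis dist_norm dist_triangle2 dist_commute add.commute)
    then have "x (Suc k) \<in> ball xb \<rho>"
      using step.IH N[OF \<open>N \<le> k\<close>] by (simp add: dist_commute)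
    then have "\<kappa> * norm (x (Suc k) - xb) < \<kappa> * (\<rho> / 2)"
      using bound N[of "Suc k"] \<open>N \<le> k\<close> by fastforce
    then show ?case
      using \<open>0 < \<kappa>\<close> by (simp add: dist_norm)
  qed
  show ?thesis
  proof (rule LIM_zero_cancel, rule Lim_null_comparison)
    show "\<forall>\<^sub>F k in sequentially. norm (x k - xb) \<le> norm (f (x k)) / \<kappa>"
      unfolding eventually_sequentially
    proof (intro exI allI impI)
      fix k assume "k\<^sub>0 \<le> k"
      then have "x k \<in> ball xb \<rho>" using near[of k] \<open>0 < \<rho>\<close> by (simp add: dist_commute)
      then show "norm (x k - xb) \<le> norm (f (x k)) / \<kappa>"
        using bound \<open>0 < \<kappa>\<close> by (simp add: field_simps)
    qed
    show "(\<lambda>k. norm (f (x k)) / \<kappa>) \<longlonglongrightarrow> 0"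
      using tendsto_divide[OF tendsto_norm[OF f] tendsto_const, of \<kappa>] \<open>0 < \<kappa>\<close> by simp
  qed
qed

lemma error_bound_if_strongly_monotone:
  fixes f :: "'a::real_inner \<Rightarrow> 'a"
  assumes "f xb = 0" "\<kappa> * (norm (y - xb))\<^sup>2 \<le> inner (f y - f xb) (y - xb)"
  shows "\<kappa> * norm (y - xb) \<le> norm (f y)"
proof -
  have "(\<kappa> * norm (y - xb)) * norm (y - xb) \<le> norm (f y) * norm (y - xb)"
    using assms Cauchy_Schwarz_ineq2[of "f y" "y - xb"] by (simp add: power2_eq_square mult.assoc)
  then show ?thesis
    by (cases "y = xb") (simp_all add: mult_le_cancel_right)
qed

lemma stationary_cluster_point:
  fixes f :: "'a::metric_space \<Rightarrow> 'b::real_normed_vector"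
  assumes "compact K" "\<And>k. x k \<in> K" "continuous_on UNIV f" "(\<lambda>k. f (x k)) \<longlonglongrightarrow> 0"
  obtains r xb where "strict_mono r" "xb \<in> K" "(\<lambda>n. x (r n)) \<longlonglongrightarrow> xb" "f xb = 0"
proof -
  obtain xb r where "xb \<in> K" "strict_mono r" and sub: "(\<lambda>n. x (r n)) \<longlonglongrightarrow> xb"
    using compact_imp_seq_compact[OF \<open>compact K\<close>] assms(2) unfolding seq_compact_def o_def by blast
  moreover have "f xb = 0"
  proof (rule LIMSEQ_unique)
    show "(\<lambda>n. f (x (r n))) \<longlonglongrightarrow> f xb"
      by (rule isCont_tendsto_compose[OF _ sub]) (use assms(3) in \<open>simp add: continuous_on_eq_continuous_at\<close>)
    show "(\<lambda>n. f (x (r n))) \<longlonglongrightarrow> 0"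
      using LIMSEQ_subseq_LIMSEQ[OF assms(4) \<open>strict_mono r\<close>] by (simp add: o_def)
  qed
  ultimately show ?thesis using that by blast
qed

lemma tilt_stable_limit_if_strongly_monotone:
  fixes \<phi> :: "'a::euclidean_space \<Rightarrow> real"
  assumes diff: "\<forall>x. \<phi> differentiable (at x)" and "grad \<phi> xb = 0" "0 < \<rho>" "0 < \<kappa>"
    and SM: "\<And>a b. a \<in> ball xb \<rho> \<Longrightarrow> b \<in> ball xb \<rho> \<Longrightarrow>
      \<kappa> * (norm (b - a))\<^sup>2 \<le> inner (grad \<phi> b - grad \<phi> a) (b - a)"
    and "(\<lambda>k. grad \<phi> (x k)) \<longlonglongrightarrow> 0" "(\<lambda>k. x (Suc k) - x k) \<longlonglongrightarrow> 0"
    and "strict_mono r" "(\<lambda>n. x (r n)) \<longlonglongrightarrow> xb"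
  shows "x \<longlonglongrightarrow> xb" "tilt_stable_local_min \<phi> xb"
proof -
  show "x \<longlonglongrightarrow> xb"
  proof (rule tendsto_of_local_error_bound[OF assms(6-9)])
    show "\<kappa> * norm (y - xb) \<le> norm (grad \<phi> y)" if "y \<in> ball xb \<rho>" for y
      using SM[of xb y] that \<open>0 < \<rho>\<close> \<open>grad \<phi> xb = 0\<close> by (intro error_bound_if_strongly_monotone) auto
  qed (use \<open>0 < \<rho>\<close> \<open>0 < \<kappa>\<close> in auto)
  show "tilt_stable_local_min \<phi> xb"
  proof (rule tilt_stable_if_strongly_monotone[OF diff \<open>grad \<phi> xb = 0\<close> _ \<open>0 < \<kappa>\<close>])
    show "\<kappa> * (norm (b - a))\<^sup>2 \<le> inner (grad \<phi> b - grad \<phi> a) (b - a)"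
      if "a \<in> cball xb (\<rho>/2)" "b \<in> cball xb (\<rho>/2)" for a b
      using that \<open>0 < \<rho>\<close> by (intro SM) auto
  qed (use \<open>0 < \<rho>\<close> in simp)
qed

theorem theorem3p7:
  fixes \<phi> :: "'a::euclidean_space \<Rightarrow> real" and x0 :: 'a and \<sigma> \<beta> :: real
  assumes "C11 \<phi>"
    and "0 < \<sigma>" and "\<sigma> < 1/2" and "0 < \<beta>" and "\<beta> < 1"
    and posdef: "\<forall>x\<in>{x. \<phi> x \<le> \<phi> x0}. \<forall>u z. u \<noteq> 0 \<and> z \<in> second_subdiff \<phi> x u \<longrightarrow> inner z u > 0"
    and bdd: "bounded {x. \<phi> x \<le> \<phi> x0}"
  shows "\<forall>x. gdna_sequence \<phi> \<sigma> \<beta> x0 x \<longrightarrow>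
           (\<exists>xb. x \<longlonglongrightarrow> xb \<and> tilt_stable_local_min \<phi> xb)"
proof (intro allI impI)
  fix x assume gdna: "gdna_sequence \<phi> \<sigma> \<beta> x0 x"
  have diff: "\<forall>x. \<phi> differentiable (at x)" and cont: "continuous_on UNIV (grad \<phi>)"
    and loclip: "\<forall>x. \<exists>U L. open U \<and> x \<in> U \<and> L-lipschitz_on U (grad \<phi>)"
    using \<open>C11 \<phi>\<close> by (auto simp: C11_def)
  have "continuous_on UNIV \<phi>"
    using diff by (intro differentiable_imp_continuous_on differentiable_at_imp_differentiable_on) auto
  then have "compact {x. \<phi> x \<le> \<phi> x0}"
    using bdd by (simp add: compact_eq_bounded_closed closed_Collect_le)
  then obtain \<delta> \<kappa> where "\<delta> > 0" "\<kappa> > 0"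
    and regular: "\<And>x y w v. y \<in> {x. \<phi> x \<le> \<phi> x0} \<Longrightarrow> dist x y < \<delta> \<Longrightarrow>
      w \<in> regular_coderivative (grad \<phi>) x v \<Longrightarrow> \<kappa> * (norm v)\<^sup>2 \<le> inner w v"
    and limiting: "\<And>y u z. y \<in> {x. \<phi> x \<le> \<phi> x0} \<Longrightarrow> z \<in> second_subdiff \<phi> y u \<Longrightarrow> \<kappa> * (norm u)\<^sup>2 \<le> inner z u"
    using uniform_posdef_second_subdiff[OF \<open>C11 \<phi>\<close> _ posdef] by blast
  have "\<sigma> < 1" using \<open>\<sigma> < 1/2\<close> by simp
  from gdna_sequence_limits[OF \<open>C11 \<phi>\<close> \<open>0 < \<sigma>\<close> this \<open>0 < \<beta>\<close> \<open>\<beta> < 1\<close> \<open>\<kappa> > 0\<close> \<open>compact _\<close> _ gdna] limiting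
  have iterates: "\<And>k. x k \<in> {x. \<phi> x \<le> \<phi> x0}" "(\<lambda>k. grad \<phi> (x k)) \<longlonglongrightarrow> 0" "(\<lambda>k. x (Suc k) - x k) \<longlonglongrightarrow> 0"
    by simp_all
  obtain r xb where "strict_mono r" "xb \<in> {x. \<phi> x \<le> \<phi> x0}" and sub: "(\<lambda>n. x (r n)) \<longlonglongrightarrow> xb"
    and "grad \<phi> xb = 0"
    by (rule stationary_cluster_point[OF \<open>compact _\<close> iterates(1) cont iterates(2)])
  have SM: "\<kappa> * (norm (b - a))\<^sup>2 \<le> inner (grad \<phi> b - grad \<phi> a) (b - a)"
    if "a \<in> ball xb (\<delta>/2)" "b \<in> ball xb (\<delta>/2)" for a b
    using regular[OF \<open>xb \<in> _\<close>] loclip that by (intro local_strong_monotonicity[OF \<open>\<delta> > 0\<close>])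
  have "0 < \<delta>/2" using \<open>\<delta> > 0\<close> by simp
  from tilt_stable_limit_if_strongly_monotone[OF diff \<open>grad \<phi> xb = 0\<close> this \<open>\<kappa> > 0\<close> SM iterates(2,3)
      \<open>strict_mono r\<close> sub]
  show "\<exists>xb. x \<longlonglongrightarrow> xb \<and> tilt_stable_local_min \<phi> xb" by blast
qed

end
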